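(* Let $f(X)=\sum_{a=(h_1,\dots,h_N)\in\mathcal{A}} w_a\sum_{\biguplus_{i=1}^N X_i=X}\prod_{i=1}^N f_{h_i}(X_i)$ be a multi-Bernoulli mixture, let $p\ge1$, $c>0$, and let $d$ be a distance on $\mathcal{X}$ with $d_c(x,y)=\min\{c,d(x,y)\}$. Consider the problem of finding an estimate $\hat X=\bigcup_{j=1}^N\hat X_j$, where each $\hat X_j$ is either $\emptyset$ or a singleton $\{\hat x_j\}$, that solves $$\operatorname*{argmin}_{\hat X}\int \bar d(X,\hat X)^p f(X)\,\delta X,$$ where for $X=\{x_1,\dots,x_n\}$, $Y=\{y_1,\dots,y_m\}$ with $n\ge m$, $\bar d(X,Y)=\big[\min_{\pi\in\Pi_n}\sum_{j=1}^m d_c(x_{\pi(j)},y_j)^p+c^p(n-m)\big]^{1/p}$, and $\bar d(X,Y)=\bar d(Y,X)$ if $n<m$. Then the solution of this problem is the same as the solution of $$\operatorname*{argmin}_{[\hat X_j]}\sum_{a\in\mathcal{A}}w_a\int\cdots\int\prod_{i=1}^N f_{h_i}(X_i)\; \bar d\big([X_i],[\hat X_j]\big)^p\,\delta X_1\cdots\delta X_N,$$ where the optimisation is over Bernoulli sets $\hat X_1,\dots,\hat X_N$ (each empty or a singleton) and $\bar d([X_i],[\hat X_j])=\min_{\pi\in\Pi_N}\big[\sum_{i=1}^N\bar d(X_i,\hat X_{\pi(i)})^p\big]^{1/p}$, with, for sets of at most one element, $\bar d(\emptyset,\emptyset)=0$, $\bar d(X_i,\hat X_j)=c$ if exactly one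 of $X_i,\hat X_j$ is empty, and $\bar d(\{x_i\},\{\hat x_j\})=d_c(x_i,\hat x_j)$.
   Context: Single-target states lie in $\mathcal{X}\subseteq\mathbb{R}^d$. The set integral is $\int v(X)\,\delta X = v(\emptyset)+\sum_{n=1}^\infty\frac{1}{n!}\int\cdots\int v(\{x_1,\dots,x_n\})\,\mathrm{d}x_1\cdots\mathrm{d}x_n$. A Bernoulli density with existence probability $r$ and state density $p(x)$ is $b(\emptyset)=1-r$, $b(\{x\})=r\,p(x)$, $b(X)=0$ for $|X|>1$. $\mathcal{H}$ is an index set of single-target hypotheses, each $f_h$ ($h\in\mathcal{H}$) a Bernoulli density; $\mathcal{A}\subseteq\mathcal{H}^N$ is a finite set of global hypotheses $a=(h_1,\dots,h_N)$ with weights $w_a\ge0$, $\sum_a w_a=1$. $\sum_{\biguplus_{i=1}^N X_i=X}$ sums over ordered tuples of disjoint subsets with union $X$. $\Pi_k$ is the set of permutations of $\{1,\dots,k\}$. *)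

theory Defs
  imports "HOL-Analysis.Analysis"
begin

definition dcut :: "real \<Rightarrow> ('a \<Rightarrow> 'a \<Rightarrow> real) \<Rightarrow> 'a \<Rightarrow> 'a \<Rightarrow> real" where
  "dcut c d x y = min c (d x y)"

definition enum_set :: "'a set \<Rightarrow> 'a list" where
  "enum_set X = (SOME xs. set xs = X \<and> distinct xs)"

text \<open>The metric d-bar(X,Y) for n = |X| >= m = |Y| (0-indexed permutations of {0..n-1}).\<close>
definition ospa_ge :: "real \<Rightarrow> real \<Rightarrow> ('a \<Rightarrow> 'a \<Rightarrow> real) \<Rightarrow> 'a set \<Rightarrow> 'a set \<Rightarrow> real" where
  "ospa_ge p c d X Y =
     (let xs = enum_set X; ys = enum_set Y; n = length xs; m = length ys in
      (Min {(\<Sum>j<m. dcut c d (xs ! (\<pi> j)) (ys ! j) powr p) + c powr p * real (n - m)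
              | \<pi>. \<pi> permutes {..<n}}) powr (1 / p))"

definition dbar :: "real \<Rightarrow> real \<Rightarrow> ('a \<Rightarrow> 'a \<Rightarrow> real) \<Rightarrow> 'a set \<Rightarrow> 'a set \<Rightarrow> real" where
  "dbar p c d X Y = (if card Y \<le> card X then ospa_ge p c d X Y else ospa_ge p c d Y X)"

definition dbarB :: "real \<Rightarrow> ('a \<Rightarrow> 'a \<Rightarrow> real) \<Rightarrow> 'a set \<Rightarrow> 'a set \<Rightarrow> real" where
  "dbarB c d X Y =
     (if X = {} \<and> Y = {} then 0
      else if X = {} \<or> Y = {} then c
      else dcut c d (the_elem X) (the_elem Y))"

definition dbar_tuple :: "real \<Rightarrow> real \<Rightarrow> ('a \<Rightarrow> 'a \<Rightarrow> real) \<Rightarrow> nat \<Rightarrow>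
    (nat \<Rightarrow> 'a set) \<Rightarrow> (nat \<Rightarrow> 'a set) \<Rightarrow> real" where
  "dbar_tuple p c d N Xs Ys =
     Min {(\<Sum>i<N. dbarB c d (Xs i) (Ys (\<pi> i)) powr p) powr (1 / p) | \<pi>. \<pi> permutes {..<N}}"

definition bern :: "real \<Rightarrow> ('a \<Rightarrow> real) \<Rightarrow> 'a set \<Rightarrow> real" where
  "bern r q X = (if X = {} then 1 - r else if card X = 1 then r * q (the_elem X) else 0)"

definition oparts :: "nat \<Rightarrow> 'a set \<Rightarrow> (nat \<Rightarrow> 'a set) set" where
  "oparts N X = {Xs. Xs \<in> {..<N} \<rightarrow>\<^sub>E Pow X \<and> disjoint_family_on Xs {..<N} \<and> (\<Union>i<N. Xs i) = X}"

text \<open>Multi-Bernoulli mixture density; global hypotheses are lists of length N.\<close>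
definition mbm :: "nat \<Rightarrow> 'h list set \<Rightarrow> ('h list \<Rightarrow> real) \<Rightarrow> ('h \<Rightarrow> real) \<Rightarrow> ('h \<Rightarrow> 'a \<Rightarrow> real)
    \<Rightarrow> 'a set \<Rightarrow> real" where
  "mbm N A w r q X = (\<Sum>a\<in>A. w a * (\<Sum>Xs\<in>oparts N X. \<Prod>i<N. bern (r (a ! i)) (q (a ! i)) (Xs i)))"

definition set_int :: "('a::euclidean_space set \<Rightarrow> ennreal) \<Rightarrow> ennreal" where
  "set_int v = v {} + (\<Sum>n. ennreal (1 / fact (Suc n)) *
       (\<integral>\<^sup>+ x. v (x ` {..<Suc n}) \<partial>(PiM {..<Suc n} (\<lambda>_. lborel))))"

fun msi :: "nat \<Rightarrow> ((nat \<Rightarrow> 'a::euclidean_space set) \<Rightarrow> ennreal) \<Rightarrow> ennreal" where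
  "msi 0 g = g (\<lambda>_. {})"
| "msi (Suc k) g = set_int (\<lambda>X. msi k (\<lambda>Xs. g (Xs(k := X))))"

definition obj1 :: "real \<Rightarrow> real \<Rightarrow> ('a::euclidean_space \<Rightarrow> 'a \<Rightarrow> real) \<Rightarrow> nat \<Rightarrow> 'h list set \<Rightarrow>
    ('h list \<Rightarrow> real) \<Rightarrow> ('h \<Rightarrow> real) \<Rightarrow> ('h \<Rightarrow> 'a \<Rightarrow> real) \<Rightarrow> 'a set \<Rightarrow> ennreal" where
  "obj1 p c d N A w r q Xh = set_int (\<lambda>X. ennreal (dbar p c d X Xh powr p * mbm N A w r q X))"

definition obj2 :: "real \<Rightarrow> real \<Rightarrow> ('a::euclidean_space \<Rightarrow> 'a \<Rightarrow> real) \<Rightarrow> nat \<Rightarrow> 'h list set \<Rightarrow>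
    ('h list \<Rightarrow> real) \<Rightarrow> ('h \<Rightarrow> real) \<Rightarrow> ('h \<Rightarrow> 'a \<Rightarrow> real) \<Rightarrow> (nat \<Rightarrow> 'a set) \<Rightarrow> ennreal" where
  "obj2 p c d N A w r q Xh = (\<Sum>a\<in>A. ennreal (w a) *
      msi N (\<lambda>Xs. ennreal ((\<Prod>i<N. bern (r (a ! i)) (q (a ! i)) (Xs i)) *
                            dbar_tuple p c d N Xs Xh powr p)))"

definition bern_est :: "'a set \<Rightarrow> nat \<Rightarrow> (nat \<Rightarrow> 'a set) \<Rightarrow> bool" where
  "bern_est S N Xh = ((\<forall>j<N. Xh j = {} \<or> (\<exists>x\<in>S. Xh j = {x})) \<and> disjoint_family_on Xh {..<N})"

end

theory Submission
  imports Defs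
begin

text \<open>Both objectives coincide on every admissible estimate, and the admissible estimates are
  exactly the sets of at most N points of S, so the two argmin problems have the same solutions.

  To compare the objectives, expand each into a sum, over the sets J of present Bernoulli components,
  of integrals over the product of copies of Lebesgue measure indexed by J. For the iterated set
  integral of the second problem this is immediate, since each argument is empty or a singleton.
  For the set integral of the mixture, the sum over ordered partitions of a sample of n distinct points
  corresponds to the injective labellings of the points by components, and each J with n elements
  arises from n! labellings, which cancels the 1/n! of the set integral. On each configuration the
  integrands agree: the OSPA distance between the unions of two Bernoulli tuples is the optimal
  assignment cost between the tuples, because an optimal matching of the points extends to an
  assignment of the components in which every unmatched point meets an empty set at cost c.\<close>

lemma product_sigma_finite_lborel:
  "product_sigma_finite (\<lambda>_::'i. lborel::'a::euclidean_space measure)"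
  by (simp add: product_sigma_finite_def lborel.sigma_finite_measure_axioms)

lemma sigma_finite_PiM_lborel:
  "finite I \<Longrightarrow> sigma_finite_measure (PiM I (\<lambda>_. lborel::'a::euclidean_space measure))"
  by (rule product_sigma_finite.sigma_finite[OF product_sigma_finite_lborel])

lemma AE_PiM_lborel_neq:
  assumes "finite I" "i \<in> I" "j \<in> I" "i \<noteq> j"
  shows "AE x in PiM I (\<lambda>_. lborel::'a::euclidean_space measure). x i \<noteq> x j"
proof -
  let ?M = "PiM I (\<lambda>_. lborel::'a measure)"
  define D where "D = {x \<in> space ?M. x i = x j}"
  have [measurable]: "i \<in> I" "j \<in> I" using assms by auto
  have "D = (\<lambda>x. x i - x j) -` {0} \<inter> space ?M" unfolding D_def by auto
  also have "\<dots> \<in> sets ?M" by measurable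
  finally have D: "D \<in> sets ?M" .
  have I: "I = insert i (I - {i})" using assms by auto
  \<comment> \<open>For fixed other coordinates, the section of D in coordinate i is the single point x j.\<close>
  have section_null: "(\<integral>\<^sup>+y. indicator D (x(i:=y)) \<partial>lborel) = 0" for x
  proof -
    have "(\<integral>\<^sup>+y. indicator D (x(i:=y)) \<partial>lborel) \<le> (\<integral>\<^sup>+y. indicator {x j} y \<partial>(lborel::'a measure))"
      by (rule nn_integral_mono) (use assms in \<open>auto simp: D_def indicator_def\<close>)
    then show ?thesis by simp
  qed
  have "emeasure ?M D = (\<integral>\<^sup>+x. indicator D x \<partial>?M)" using D by simp
  also have "\<dots> = (\<integral>\<^sup>+x. (\<integral>\<^sup>+y. indicator D (x(i:=y)) \<partial>lborel) \<partial>PiM (I-{i}) (\<lambda>_. lborel))"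
    by (subst I, rule product_sigma_finite.product_nn_integral_insert[OF product_sigma_finite_lborel])
       (use assms D I in auto)
  finally have "emeasure ?M D = 0" by (simp add: section_null)
  then show ?thesis
    by (intro AE_I[OF _ _ D]) (auto simp: D_def)
qed

lemma AE_PiM_lborel_inj_on:
  "AE x in PiM {..<n::nat} (\<lambda>_. lborel::'a::euclidean_space measure). inj_on x {..<n}"
proof -
  let ?P = "{ij::nat \<times> nat. fst ij < n \<and> snd ij < n \<and> fst ij \<noteq> snd ij}"
  have "countable ?P"
    by (rule countable_finite, rule finite_subset[of _ "{..<n} \<times> {..<n}"]) auto
  then have "AE x in PiM {..<n} (\<lambda>_. lborel::'a measure). \<forall>ij\<in>?P. x (fst ij) \<noteq> x (snd ij)"
    by (subst AE_ball_countable) (auto intro!: AE_PiM_lborel_neq)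
  then show ?thesis
    by (rule AE_mp) (auto intro!: AE_I2 simp: inj_on_def)
qed

lemma measurable_PiM_reindex:
  assumes "\<And>j. j \<in> J \<Longrightarrow> g j \<in> K"
  shows "(\<lambda>\<omega>. \<lambda>j\<in>J. \<omega> (g j)) \<in> measurable (PiM K (\<lambda>_. M)) (PiM J (\<lambda>_. M))"
  by (rule measurable_restrict, rule measurable_component_singleton) (use assms in auto)

lemma distr_PiM_reindex_bij:
  assumes M: "sigma_finite_measure M" and f: "bij_betw f I K" and K: "finite K"
  shows "distr (PiM K (\<lambda>_. M)) (PiM I (\<lambda>_. M)) (\<lambda>\<omega>. \<lambda>n\<in>I. \<omega> (f n)) = PiM I (\<lambda>_. M)"
proof -
  have psf: "product_sigma_finite (\<lambda>_::'i. M)" using M by (simp add: product_sigma_finite_def)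
  have I: "finite I" using f K bij_betw_finite by blast
  have fm: "(\<lambda>\<omega>. \<lambda>n\<in>I. \<omega> (f n)) \<in> measurable (PiM K (\<lambda>_. M)) (PiM I (\<lambda>_. M))"
    by (rule measurable_PiM_reindex) (use f in \<open>auto simp: bij_betw_def\<close>)
  define g where "g = the_inv_into I f"
  have g: "bij_betw g K I" unfolding g_def using f by (rule bij_betw_the_inv_into)
  have fg: "k \<in> K \<Longrightarrow> f (g k) = k" for k
    unfolding g_def using f by (simp add: f_the_inv_into_f_bij_betw)
  have gf: "i \<in> I \<Longrightarrow> g (f i) = i" for i
    unfolding g_def using f by (meson bij_betw_imp_inj_on the_inv_into_f_f)
  show ?thesis
  proof (rule product_sigma_finite.PiM_eqI[OF psf I])
    fix A assume A: "\<And>i. i \<in> I \<Longrightarrow> A i \<in> sets M"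
    have "(\<lambda>\<omega>. \<lambda>n\<in>I. \<omega> (f n)) -` Pi\<^sub>E I A \<inter> space (PiM K (\<lambda>_. M)) = Pi\<^sub>E K (\<lambda>k. A (g k))"
    proof (intro set_eqI iffI)
      fix \<omega> assume \<omega>: "\<omega> \<in> (\<lambda>\<omega>. \<lambda>n\<in>I. \<omega> (f n)) -` Pi\<^sub>E I A \<inter> space (PiM K (\<lambda>_. M))"
      have "\<omega> k \<in> A (g k)" if "k \<in> K" for k
        using \<omega> bij_betwE[OF g] that fg[OF that] by (force simp: PiE_def Pi_def)
      then show "\<omega> \<in> Pi\<^sub>E K (\<lambda>k. A (g k))" using \<omega> by (simp add: space_PiM PiE_def)
    next
      fix \<omega> assume \<omega>: "\<omega> \<in> Pi\<^sub>E K (\<lambda>k. A (g k))"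
      have "\<omega> (f i) \<in> A i" if "i \<in> I" for i
        using \<omega> bij_betwE[OF f] that gf[OF that] by (force simp: PiE_def Pi_def)
      then show "\<omega> \<in> (\<lambda>\<omega>. \<lambda>n\<in>I. \<omega> (f n)) -` Pi\<^sub>E I A \<inter> space (PiM K (\<lambda>_. M))"
        using \<omega> A[THEN sets.sets_into_space] bij_betwE[OF g] by (fastforce simp: space_PiM PiE_def Pi_def)
    qed
    moreover have "Pi\<^sub>E I A \<in> sets (PiM I (\<lambda>_. M))" using A by (intro sets_PiM_I_finite I) auto
    ultimately have "emeasure (distr (PiM K (\<lambda>_. M)) (PiM I (\<lambda>_. M)) (\<lambda>\<omega>. \<lambda>n\<in>I. \<omega> (f n))) (Pi\<^sub>E I A)
        = emeasure (PiM K (\<lambda>_. M)) (Pi\<^sub>E K (\<lambda>k. A (g k)))"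
      by (simp add: emeasure_distr[OF fm])
    also have "\<dots> = (\<Prod>k\<in>K. emeasure M (A (g k)))"
      using A g K by (intro product_sigma_finite.emeasure_PiM[OF psf]) (auto simp: bij_betw_def)
    also have "\<dots> = (\<Prod>i\<in>I. emeasure M (A i))"
      using prod.reindex_bij_betw[OF g, of "\<lambda>i. emeasure M (A i)"] by simp
    finally show "emeasure (distr (PiM K (\<lambda>_. M)) (PiM I (\<lambda>_. M)) (\<lambda>\<omega>. \<lambda>n\<in>I. \<omega> (f n))) (Pi\<^sub>E I A)
        = (\<Prod>i\<in>I. emeasure M (A i))" .
  qed simp
qed

lemma nn_integral_PiM_reindex_bij:
  assumes M: "sigma_finite_measure M" and f: "bij_betw f I K" and K: "finite K"
    and h: "h \<in> borel_measurable (PiM I (\<lambda>_. M))"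
  shows "(\<integral>\<^sup>+y. h y \<partial>PiM I (\<lambda>_. M)) = (\<integral>\<^sup>+\<omega>. h (\<lambda>n\<in>I. \<omega> (f n)) \<partial>PiM K (\<lambda>_. M))"
proof -
  have "(\<lambda>\<omega>. \<lambda>n\<in>I. \<omega> (f n)) \<in> measurable (PiM K (\<lambda>_. M)) (PiM I (\<lambda>_. M))"
    by (rule measurable_PiM_reindex) (use f in \<open>auto simp: bij_betw_def\<close>)
  from nn_integral_distr[OF this] h show ?thesis
    by (simp add: distr_PiM_reindex_bij[OF M f K])
qed

lemma set_int_at_most_singleton:
  fixes v :: "'a::euclidean_space set \<Rightarrow> ennreal"
  assumes v_zero: "\<And>X. finite X \<Longrightarrow> 2 \<le> card X \<Longrightarrow> v X = 0"
    and v_meas: "(\<lambda>x. v {x}) \<in> borel_measurable lborel"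
  shows "set_int v = v {} + (\<integral>\<^sup>+x. v {x} \<partial>lborel)"
proof -
  have one_point: "(\<integral>\<^sup>+ x. v (x ` {..<Suc 0}) \<partial>(PiM {..<Suc 0} (\<lambda>_. lborel))) = (\<integral>\<^sup>+x. v {x} \<partial>lborel)"
    using product_sigma_finite.product_nn_integral_singleton[OF product_sigma_finite_lborel v_meas, of 0]
    by (simp add: lessThan_Suc)
  \<comment> \<open>With two or more points, almost every sample has two distinct points, where v vanishes.\<close>
  have more_points: "(\<integral>\<^sup>+ x. v (x ` {..<Suc n}) \<partial>(PiM {..<Suc n} (\<lambda>_. lborel))) = 0" if "n \<noteq> 0" for n
  proof -
    have "AE x in PiM {..<Suc n} (\<lambda>_. lborel::'a measure). x 0 \<noteq> x 1"
      by (rule AE_PiM_lborel_neq) (use that in auto)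
    then have "AE x in PiM {..<Suc n} (\<lambda>_. lborel::'a measure). v (x ` {..<Suc n}) = 0"
    proof (rule AE_mp, intro AE_I2 impI)
      fix x :: "nat \<Rightarrow> 'a" assume "x 0 \<noteq> x 1"
      moreover have "{x 0, x 1} \<subseteq> x ` {..<Suc n}" using that by auto
      ultimately have "2 \<le> card (x ` {..<Suc n})"
        by (metis card_2_iff card_mono finite_imageI finite_lessThan)
      then show "v (x ` {..<Suc n}) = 0" by (intro v_zero) auto
    qed
    then show ?thesis by (simp add: nn_integral_cong_AE)
  qed
  have "(\<Sum>n. ennreal (1 / fact (Suc n)) * (\<integral>\<^sup>+ x. v (x ` {..<Suc n}) \<partial>(PiM {..<Suc n} (\<lambda>_. lborel))))
     = (\<Sum>n\<in>{0}. ennreal (1 / fact (Suc n)) * (\<integral>\<^sup>+ x. v (x ` {..<Suc n}) \<partial>(PiM {..<Suc n} (\<lambda>_. lborel))))"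
    by (rule suminf_finite) (auto simp: more_points)
  then show ?thesis unfolding set_int_def by (simp add: one_point)
qed

definition singleton_tuple :: "nat set \<Rightarrow> (nat \<Rightarrow> 'a) \<Rightarrow> nat \<Rightarrow> 'a set" where
  "singleton_tuple J y = (\<lambda>i. if i \<in> J then {y i} else {})"

lemma singleton_tuple_upd_singleton:
  "k \<notin> J \<Longrightarrow> (singleton_tuple J y)(k := {x}) = singleton_tuple (insert k J) (y(k:=x))"
  by (auto simp: singleton_tuple_def fun_eq_iff)

lemma singleton_tuple_upd_empty: "k \<notin> J \<Longrightarrow> (singleton_tuple J y)(k := {}) = singleton_tuple J y"
  by (auto simp: singleton_tuple_def fun_eq_iff)

lemma measurable_fun_upd_const:
  assumes "k \<notin> J" "h \<in> borel_measurable (PiM (insert k J) (\<lambda>_. M))" "x \<in> space M"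
  shows "(\<lambda>y. h (y(k:=x))) \<in> borel_measurable (PiM J (\<lambda>_. M))"
proof -
  have "(\<lambda>y. y(k:=x)) \<in> measurable (PiM J (\<lambda>_. M)) (PiM (insert k J) (\<lambda>_. M))"
    using assms(3) by (intro measurable_fun_upd[where J=J]) auto
  from measurable_comp[OF this assms(2)] show ?thesis by (simp add: comp_def)
qed

lemma borel_measurable_nn_integral_fun_upd:
  assumes "finite J" "k \<notin> J" "h \<in> borel_measurable (PiM (insert k J) (\<lambda>_. lborel::'a::euclidean_space measure))"
  shows "(\<lambda>x. \<integral>\<^sup>+y. h (y(k:=x)) \<partial>PiM J (\<lambda>_. lborel)) \<in> borel_measurable lborel"
proof -
  interpret sigma_finite_measure "PiM J (\<lambda>_. lborel::'a measure)"
    using assms(1) by (rule sigma_finite_PiM_lborel)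
  have "(\<lambda>z. (snd z)(k := fst z)) \<in> measurable (lborel \<Otimes>\<^sub>M PiM J (\<lambda>_. lborel::'a measure)) (PiM (insert k J) (\<lambda>_. lborel))"
    by (rule measurable_fun_upd[where J=J]) auto
  from measurable_comp[OF this assms(3)] show ?thesis
    by (intro borel_measurable_nn_integral) (simp add: comp_def case_prod_beta)
qed

lemma msi_eq_sum_PiM:
  fixes g :: "(nat \<Rightarrow> 'a::euclidean_space set) \<Rightarrow> ennreal"
  assumes g_zero: "\<And>Xs i. i < k \<Longrightarrow> finite (Xs i) \<Longrightarrow> 2 \<le> card (Xs i) \<Longrightarrow> g Xs = 0"
    and g_meas: "\<And>J. J \<subseteq> {..<k} \<Longrightarrow> (\<lambda>y. g (singleton_tuple J y)) \<in> borel_measurable (PiM J (\<lambda>_. lborel))"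
  shows "msi k g = (\<Sum>J\<in>Pow {..<k}. \<integral>\<^sup>+y. g (singleton_tuple J y) \<partial>PiM J (\<lambda>_. lborel))"
  using g_zero g_meas
proof (induction k arbitrary: g)
  case 0
  have "singleton_tuple {} y = (\<lambda>_. {})" for y :: "nat \<Rightarrow> 'a" by (simp add: singleton_tuple_def)
  then show ?case by (simp add: PiM_empty nn_integral_count_space_finite)
next
  case (Suc k)
  define v where "v X = msi k (\<lambda>Xs. g (Xs(k := X)))" for X
  have k_notin: "J \<subseteq> {..<k} \<Longrightarrow> k \<notin> J" for J by auto
  have g_meas_insert: "(\<lambda>y. g (singleton_tuple (insert k J) y)) \<in> borel_measurable (PiM (insert k J) (\<lambda>_. lborel))"
    if "J \<subseteq> {..<k}" for J
    using that by (intro Suc.prems(2)) auto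
  have v_IH: "v X = (\<Sum>J\<in>Pow {..<k}. \<integral>\<^sup>+y. g ((singleton_tuple J y)(k:=X)) \<partial>PiM J (\<lambda>_. lborel))"
    if "\<And>J. J \<subseteq> {..<k} \<Longrightarrow> (\<lambda>y. g ((singleton_tuple J y)(k:=X))) \<in> borel_measurable (PiM J (\<lambda>_. lborel))"
    for X
    unfolding v_def
  proof (rule Suc.IH)
    fix Xs :: "nat \<Rightarrow> 'a set" and i assume "i < k" "finite (Xs i)" "2 \<le> card (Xs i)"
    then show "g (Xs(k := X)) = 0" by (intro Suc.prems(1)[of i]) auto
  qed (fact that)
  have v_empty: "v {} = (\<Sum>J\<in>Pow {..<k}. \<integral>\<^sup>+y. g (singleton_tuple J y) \<partial>PiM J (\<lambda>_. lborel))"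
    by (subst v_IH) (auto simp: singleton_tuple_upd_empty k_notin intro!: Suc.prems(2))
  have v_singleton: "v {x} = (\<Sum>J\<in>Pow {..<k}.
      \<integral>\<^sup>+y. g (singleton_tuple (insert k J) (y(k:=x))) \<partial>PiM J (\<lambda>_. lborel))" for x
    using measurable_fun_upd_const[OF k_notin g_meas_insert]
    by (subst v_IH) (auto simp: singleton_tuple_upd_singleton k_notin)
  have v_zero: "v X = 0" if "finite X" "2 \<le> card X" for X
  proof -
    have "g ((singleton_tuple J y)(k:=X)) = 0" for J y
      by (rule Suc.prems(1)[of k]) (use that in auto)
    then show ?thesis by (subst v_IH) simp_all
  qed
  have inner_meas: "(\<lambda>x. \<integral>\<^sup>+y. g (singleton_tuple (insert k J) (y(k:=x))) \<partial>PiM J (\<lambda>_. lborel))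
      \<in> borel_measurable lborel" if "J \<subseteq> {..<k}" for J
    using that by (intro borel_measurable_nn_integral_fun_upd g_meas_insert) (auto intro: finite_subset)
  have v_meas: "(\<lambda>x. v {x}) \<in> borel_measurable lborel"
    unfolding v_singleton by (rule borel_measurable_sum) (use inner_meas in auto)
  have "msi (Suc k) g = v {} + (\<integral>\<^sup>+x. v {x} \<partial>lborel)"
    using set_int_at_most_singleton[OF v_zero v_meas] by (simp add: v_def[abs_def])
  also have "(\<integral>\<^sup>+x. v {x} \<partial>lborel) = (\<Sum>J\<in>Pow {..<k}.
      \<integral>\<^sup>+x. (\<integral>\<^sup>+y. g (singleton_tuple (insert k J) (y(k:=x))) \<partial>PiM J (\<lambda>_. lborel)) \<partial>lborel)"
    unfolding v_singleton by (rule nn_integral_sum) (use inner_meas in auto)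
  also have "\<dots> = (\<Sum>J\<in>Pow {..<k}. \<integral>\<^sup>+y. g (singleton_tuple (insert k J) y) \<partial>PiM (insert k J) (\<lambda>_. lborel))"
    by (intro sum.cong refl product_sigma_finite.product_nn_integral_insert_rev[OF product_sigma_finite_lborel,
        symmetric] g_meas_insert) (auto intro: finite_subset)
  also have "\<dots> = (\<Sum>J\<in>insert k ` Pow {..<k}. \<integral>\<^sup>+y. g (singleton_tuple J y) \<partial>PiM J (\<lambda>_. lborel))"
    by (subst sum.reindex) (auto simp: inj_on_def)
  finally show ?case
    unfolding v_empty lessThan_Suc Pow_insert by (subst sum.union_disjoint) auto
qed

definition labelled_parts :: "nat \<Rightarrow> nat \<Rightarrow> (nat \<Rightarrow> 'a) \<Rightarrow> (nat \<Rightarrow> nat) \<Rightarrow> nat \<Rightarrow> 'a set" where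
  "labelled_parts N n x \<sigma> = (\<lambda>i\<in>{..<N}. x ` {k. k < n \<and> \<sigma> k = i})"

lemma labelled_parts_in_oparts:
  assumes x: "inj_on x {..<n}" and s: "\<sigma> \<in> {..<n} \<rightarrow>\<^sub>E {..<N}"
  shows "labelled_parts N n x \<sigma> \<in> oparts N (x ` {..<n})"
  unfolding oparts_def
proof (intro CollectI conjI)
  show "labelled_parts N n x \<sigma> \<in> {..<N} \<rightarrow>\<^sub>E Pow (x ` {..<n})" by (auto simp: labelled_parts_def)
  show "disjoint_family_on (labelled_parts N n x \<sigma>) {..<N}"
    unfolding disjoint_family_on_def labelled_parts_def using x by (auto simp: inj_on_def)
  show "(\<Union>i<N. labelled_parts N n x \<sigma> i) = x ` {..<n}"
    using s by (force simp: labelled_parts_def)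
qed

lemma inj_on_labelled_parts:
  assumes x: "inj_on x {..<n}"
  shows "inj_on (labelled_parts N n x) ({..<n} \<rightarrow>\<^sub>E {..<N})"
proof (rule inj_onI)
  fix \<sigma> \<tau> assume s: "\<sigma> \<in> {..<n} \<rightarrow>\<^sub>E {..<N}" and t: "\<tau> \<in> {..<n} \<rightarrow>\<^sub>E {..<N}"
    and eq: "labelled_parts N n x \<sigma> = labelled_parts N n x \<tau>"
  show "\<sigma> = \<tau>"
  proof (rule extensionalityI[of _ "{..<n}"])
    show "\<sigma> \<in> extensional {..<n}" "\<tau> \<in> extensional {..<n}" using s t by (auto simp: PiE_def)
    fix k assume k: "k \<in> {..<n}"
    have sk: "\<sigma> k < N" using s k by auto
    have "x k \<in> labelled_parts N n x \<sigma> (\<sigma> k)" using k sk by (auto simp: labelled_parts_def)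
    then have "x k \<in> labelled_parts N n x \<tau> (\<sigma> k)" by (simp add: eq)
    then obtain k' where "k' < n" "\<tau> k' = \<sigma> k" "x k' = x k" using sk by (auto simp: labelled_parts_def)
    with x k have "k' = k" by (auto simp: inj_on_def)
    then show "\<sigma> k = \<tau> k" using \<open>\<tau> k' = \<sigma> k\<close> by simp
  qed
qed

lemma oparts_eq_labelled_parts:
  assumes "Xs \<in> oparts N (x ` {..<n})"
  shows "\<exists>\<sigma>\<in>{..<n} \<rightarrow>\<^sub>E {..<N}. Xs = labelled_parts N n x \<sigma>"
proof -
  from assms have Xs: "Xs \<in> {..<N} \<rightarrow>\<^sub>E Pow (x ` {..<n})" "disjoint_family_on Xs {..<N}"
    "(\<Union>i<N. Xs i) = x ` {..<n}" by (auto simp: oparts_def)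
  define \<sigma> where "\<sigma> = (\<lambda>k\<in>{..<n}. SOME i. i < N \<and> x k \<in> Xs i)"
  have sk: "\<sigma> k < N \<and> x k \<in> Xs (\<sigma> k)" if "k < n" for k
  proof -
    have ex: "\<exists>i. i < N \<and> x k \<in> Xs i" using Xs(3) that by blast
    from someI_ex[OF ex] show ?thesis unfolding \<sigma>_def using that by simp
  qed
  have s: "\<sigma> \<in> {..<n} \<rightarrow>\<^sub>E {..<N}" using sk by (auto simp: \<sigma>_def)
  have "labelled_parts N n x \<sigma> = Xs"
  proof (rule extensionalityI[of _ "{..<N}"])
    show "labelled_parts N n x \<sigma> \<in> extensional {..<N}" by (simp add: labelled_parts_def)
    show "Xs \<in> extensional {..<N}" using Xs by (auto simp: PiE_def)
    fix i assume i: "i \<in> {..<N}"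
    show "labelled_parts N n x \<sigma> i = Xs i"
    proof
      show "labelled_parts N n x \<sigma> i \<subseteq> Xs i" using i sk by (auto simp: labelled_parts_def)
      show "Xs i \<subseteq> labelled_parts N n x \<sigma> i"
      proof
        fix y assume y: "y \<in> Xs i"
        then obtain k where k: "k < n" "y = x k" using Xs(1) i by (auto simp: PiE_def Pi_def)
        have "\<sigma> k = i"
        proof (rule ccontr)
          assume "\<sigma> k \<noteq> i"
          then have "Xs (\<sigma> k) \<inter> Xs i = {}" using Xs(2) sk[OF k(1)] i by (auto simp: disjoint_family_on_def)
          then show False using sk[OF k(1)] y k by auto
        qed
        then show "y \<in> labelled_parts N n x \<sigma> i" using i k by (auto simp: labelled_parts_def)
      qed
    qed
  qed
  then show "\<exists>\<sigma>\<in>{..<n} \<rightarrow>\<^sub>E {..<N}. Xs = labelled_parts N n x \<sigma>" using s by blast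
qed

lemma bij_betw_labelled_parts:
  assumes "inj_on x {..<n}"
  shows "bij_betw (labelled_parts N n x) ({..<n} \<rightarrow>\<^sub>E {..<N}) (oparts N (x ` {..<n}))"
  unfolding bij_betw_def
proof
  show "labelled_parts N n x ` ({..<n} \<rightarrow>\<^sub>E {..<N}) = oparts N (x ` {..<n})"
    using labelled_parts_in_oparts[OF assms] oparts_eq_labelled_parts by blast
qed (rule inj_on_labelled_parts[OF assms])

lemma labelled_parts_inj_on:
  assumes "inj_on \<sigma> {..<n}" "i < N"
  shows "labelled_parts N n x \<sigma> i
    = singleton_tuple (\<sigma> ` {..<n}) (\<lambda>j\<in>\<sigma> ` {..<n}. x (the_inv_into {..<n} \<sigma> j)) i"
proof (cases "i \<in> \<sigma> ` {..<n}")
  case True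
  then obtain k where k: "k < n" "\<sigma> k = i" by auto
  have "{k. k < n \<and> \<sigma> k = i} = {k}" using assms k by (auto simp: inj_on_def)
  moreover have "the_inv_into {..<n} \<sigma> i = k" using assms k by (auto intro: the_inv_into_f_eq)
  ultimately show ?thesis using True assms by (simp add: labelled_parts_def singleton_tuple_def)
next
  case False
  then show ?thesis using assms by (auto simp: labelled_parts_def singleton_tuple_def)
qed

lemma card_inj_onto:
  assumes J: "finite J" "card J = n" "J \<subseteq> B"
  shows "card {\<sigma> \<in> {..<n} \<rightarrow>\<^sub>E B. inj_on \<sigma> {..<n} \<and> \<sigma> ` {..<n} = J} = fact n"
proof -
  have onto: "\<sigma> ` {..<n} = J" if "\<sigma> \<in> {..<n} \<rightarrow>\<^sub>E J" "inj_on \<sigma> {..<n}" for \<sigma>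
  proof (rule card_subset_eq[OF J(1)])
    show "\<sigma> ` {..<n} \<subseteq> J" using that(1) by auto
    show "card (\<sigma> ` {..<n}) = card J" using that(2) J(2) by (simp add: card_image)
  qed
  have "{\<sigma> \<in> {..<n} \<rightarrow>\<^sub>E B. inj_on \<sigma> {..<n} \<and> \<sigma> ` {..<n} = J} = {\<sigma> \<in> {..<n} \<rightarrow>\<^sub>E J. inj_on \<sigma> {..<n}}"
    using onto J(3) by (auto simp: PiE_iff)
  also have "card \<dots> = prod ((-) n) {0..<n}"
    using card_inj_on_subset_funcset[of "{..<n}" J "{..<n}"] J by simp
  also have "\<dots> = fact n"
    by (simp add: fact_prod_rev)
  finally show ?thesis .
qed

lemma sum_oparts_eq_sum_inj_labellings:
  fixes H :: "(nat \<Rightarrow> 'a set) \<Rightarrow> 'b::comm_monoid_add" and n N :: nat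
  assumes x: "inj_on x {..<n}"
    and H_zero: "\<And>Xs i. i < N \<Longrightarrow> finite (Xs i) \<Longrightarrow> 2 \<le> card (Xs i) \<Longrightarrow> H Xs = 0"
    and H_local: "\<And>Xs Ys. (\<And>i. i < N \<Longrightarrow> Xs i = Ys i) \<Longrightarrow> H Xs = H Ys"
  shows "(\<Sum>Xs\<in>oparts N (x ` {..<n}). H Xs) = (\<Sum>\<sigma>\<in>{\<sigma> \<in> {..<n} \<rightarrow>\<^sub>E {..<N}. inj_on \<sigma> {..<n}}.
           H (singleton_tuple (\<sigma> ` {..<n}) (\<lambda>j\<in>\<sigma> ` {..<n}. x (the_inv_into {..<n} \<sigma> j))))"
proof -
  have fin: "finite ({..<n} \<rightarrow>\<^sub>E {..<N})" by (rule finite_PiE) auto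
  have "(\<Sum>Xs\<in>oparts N (x ` {..<n}). H Xs) = (\<Sum>\<sigma>\<in>{..<n} \<rightarrow>\<^sub>E {..<N}. H (labelled_parts N n x \<sigma>))"
    using sum.reindex_bij_betw[OF bij_betw_labelled_parts[OF x, of N], of H] by simp
  \<comment> \<open>A non-injective labelling puts two distinct points into one part.\<close>
  also have "\<dots> = (\<Sum>\<sigma>\<in>{\<sigma> \<in> {..<n} \<rightarrow>\<^sub>E {..<N}. inj_on \<sigma> {..<n}}. H (labelled_parts N n x \<sigma>))"
  proof (rule sum.mono_neutral_right[OF fin], blast, intro ballI)
    fix \<sigma> assume "\<sigma> \<in> ({..<n} \<rightarrow>\<^sub>E {..<N}) - {\<sigma> \<in> {..<n} \<rightarrow>\<^sub>E {..<N}. inj_on \<sigma> {..<n}}"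
    then obtain k1 k2 where \<sigma>: "\<sigma> \<in> {..<n} \<rightarrow>\<^sub>E {..<N}"
      and k: "k1 < n" "k2 < n" "k1 \<noteq> k2" "\<sigma> k1 = \<sigma> k2"
      by (auto simp: inj_on_def)
    have i: "\<sigma> k1 < N" using \<sigma> k by auto
    have "{x k1, x k2} \<subseteq> labelled_parts N n x \<sigma> (\<sigma> k1)" using k i by (auto simp: labelled_parts_def)
    moreover have "x k1 \<noteq> x k2" using x k by (auto simp: inj_on_def)
    ultimately have "2 \<le> card (labelled_parts N n x \<sigma> (\<sigma> k1))"
      using card_mono[of "labelled_parts N n x \<sigma> (\<sigma> k1)" "{x k1, x k2}"] by (simp add: labelled_parts_def i)
    then show "H (labelled_parts N n x \<sigma>) = 0"
      using i by (intro H_zero[of "\<sigma> k1"]) (auto simp: labelled_parts_def)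
  qed
  also have "\<dots> = (\<Sum>\<sigma>\<in>{\<sigma> \<in> {..<n} \<rightarrow>\<^sub>E {..<N}. inj_on \<sigma> {..<n}}.
           H (singleton_tuple (\<sigma> ` {..<n}) (\<lambda>j\<in>\<sigma> ` {..<n}. x (the_inv_into {..<n} \<sigma> j))))"
    by (intro sum.cong refl H_local labelled_parts_inj_on) auto
  finally show ?thesis .
qed

lemma measurable_PiM_relabel:
  fixes n :: nat
  assumes "inj_on \<sigma> {..<n}" "h \<in> borel_measurable (PiM (\<sigma> ` {..<n}) (\<lambda>_. M))"
  shows "(\<lambda>x. h (\<lambda>j\<in>\<sigma> ` {..<n}. x (the_inv_into {..<n} \<sigma> j))) \<in> borel_measurable (PiM {..<n} (\<lambda>_. M))"
proof -
  have "(\<lambda>x. \<lambda>j\<in>\<sigma> ` {..<n}. x (the_inv_into {..<n} \<sigma> j)) \<in> measurable (PiM {..<n} (\<lambda>_. M)) (PiM (\<sigma> ` {..<n}) (\<lambda>_. M))"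
    using assms(1) by (intro measurable_PiM_reindex) (auto simp: the_inv_into_f_f)
  from measurable_comp[OF this assms(2)] show ?thesis by (simp add: comp_def)
qed

lemma nn_integral_PiM_relabel:
  fixes n :: nat
  assumes "sigma_finite_measure M" "inj_on \<sigma> {..<n}" "h \<in> borel_measurable (PiM (\<sigma> ` {..<n}) (\<lambda>_. M))"
  shows "(\<integral>\<^sup>+x. h (\<lambda>j\<in>\<sigma> ` {..<n}. x (the_inv_into {..<n} \<sigma> j)) \<partial>PiM {..<n} (\<lambda>_. M))
    = (\<integral>\<^sup>+y. h y \<partial>PiM (\<sigma> ` {..<n}) (\<lambda>_. M))"
  using assms by (intro nn_integral_PiM_reindex_bij[symmetric] bij_betw_the_inv_into) (auto simp: bij_betw_def)

lemma nn_integral_image_sum_oparts: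
  fixes H :: "(nat \<Rightarrow> 'a::euclidean_space set) \<Rightarrow> ennreal" and F :: "'a set \<Rightarrow> ennreal"
  assumes F: "\<And>x. inj_on x {..<n} \<Longrightarrow> F (x ` {..<n}) = (\<Sum>Xs\<in>oparts N (x ` {..<n}). H Xs)"
    and H_zero: "\<And>Xs i. i < N \<Longrightarrow> finite (Xs i) \<Longrightarrow> 2 \<le> card (Xs i) \<Longrightarrow> H Xs = 0"
    and H_local: "\<And>Xs Ys. (\<And>i. i < N \<Longrightarrow> Xs i = Ys i) \<Longrightarrow> H Xs = H Ys"
    and H_meas: "\<And>J. J \<subseteq> {..<N} \<Longrightarrow> (\<lambda>y. H (singleton_tuple J y)) \<in> borel_measurable (PiM J (\<lambda>_. lborel))"
  shows "(\<integral>\<^sup>+x. F (x ` {..<n}) \<partial>PiM {..<n} (\<lambda>_. lborel)) = of_nat (fact n) *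
    (\<Sum>J\<in>{J\<in>Pow {..<N}. card J = n}. \<integral>\<^sup>+y. H (singleton_tuple J y) \<partial>PiM J (\<lambda>_. lborel))"
proof -
  define Inj where "Inj = {\<sigma> \<in> {..<n} \<rightarrow>\<^sub>E {..<N}. inj_on \<sigma> {..<n}}"
  define I where "I J = (\<integral>\<^sup>+y. H (singleton_tuple J y) \<partial>PiM J (\<lambda>_. lborel::'a measure))" for J
  define R where "R \<sigma> x = H (singleton_tuple (\<sigma> ` {..<n}) (\<lambda>j\<in>\<sigma> ` {..<n}. x (the_inv_into {..<n} \<sigma> j)))"
    for \<sigma> and x :: "nat \<Rightarrow> 'a"
  have Inj_fin: "finite Inj"
    unfolding Inj_def by (rule finite_subset[of _ "{..<n} \<rightarrow>\<^sub>E {..<N}"]) (auto intro: finite_PiE)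
  have \<sigma>: "inj_on \<sigma> {..<n}" "\<sigma> ` {..<n} \<subseteq> {..<N}" if "\<sigma> \<in> Inj" for \<sigma>
    using that by (auto simp: Inj_def)
  have "(\<integral>\<^sup>+x. F (x ` {..<n}) \<partial>PiM {..<n} (\<lambda>_. lborel)) = (\<integral>\<^sup>+x. (\<Sum>\<sigma>\<in>Inj. R \<sigma> x) \<partial>PiM {..<n} (\<lambda>_. lborel))"
  proof (rule nn_integral_cong_AE, rule AE_mp[OF AE_PiM_lborel_inj_on], intro AE_I2 impI)
    fix x :: "nat \<Rightarrow> 'a" assume x: "inj_on x {..<n}"
    show "F (x ` {..<n}) = (\<Sum>\<sigma>\<in>Inj. R \<sigma> x)"
      unfolding F[OF x] R_def Inj_def by (rule sum_oparts_eq_sum_inj_labellings[OF x H_zero H_local])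
  qed
  also have "\<dots> = (\<Sum>\<sigma>\<in>Inj. I (\<sigma> ` {..<n}))"
    unfolding R_def I_def
    using measurable_PiM_relabel[OF \<sigma>(1) H_meas[OF \<sigma>(2)]]
      nn_integral_PiM_relabel[OF lborel.sigma_finite_measure_axioms \<sigma>(1) H_meas[OF \<sigma>(2)]]
    by (subst nn_integral_sum) simp_all
  also have "\<dots> = (\<Sum>J\<in>{J\<in>Pow {..<N}. card J = n}. \<Sum>\<sigma>\<in>{\<sigma>\<in>Inj. \<sigma> ` {..<n} = J}. I (\<sigma> ` {..<n}))"
  proof (rule sum.group[symmetric, OF Inj_fin])
    show "(\<lambda>\<sigma>. \<sigma> ` {..<n}) ` Inj \<subseteq> {J\<in>Pow {..<N}. card J = n}"
      using \<sigma>(2) by (auto simp: Inj_def card_image)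
  qed simp
  also have "\<dots> = (\<Sum>J\<in>{J\<in>Pow {..<N}. card J = n}. of_nat (fact n) * I J)"
  proof (rule sum.cong[OF refl])
    fix J assume J: "J \<in> {J\<in>Pow {..<N}. card J = n}"
    have "{\<sigma>\<in>Inj. \<sigma> ` {..<n} = J} = {\<sigma> \<in> {..<n} \<rightarrow>\<^sub>E {..<N}. inj_on \<sigma> {..<n} \<and> \<sigma> ` {..<n} = J}"
      by (auto simp: Inj_def)
    then have "card {\<sigma>\<in>Inj. \<sigma> ` {..<n} = J} = fact n"
      using J card_inj_onto[of J n "{..<N}"] by (simp add: finite_subset)
    then show "(\<Sum>\<sigma>\<in>{\<sigma>\<in>Inj. \<sigma> ` {..<n} = J}. I (\<sigma> ` {..<n})) = of_nat (fact n) * I J"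
      by simp
  qed
  finally show ?thesis by (simp add: sum_distrib_left I_def)
qed

lemma set_int_sum_oparts:
  fixes H :: "(nat \<Rightarrow> 'a::euclidean_space set) \<Rightarrow> ennreal" and F :: "'a set \<Rightarrow> ennreal"
  assumes F: "\<And>(n::nat) x. inj_on x {..<n} \<Longrightarrow> F (x ` {..<n}) = (\<Sum>Xs\<in>oparts N (x ` {..<n}). H Xs)"
    and H_zero: "\<And>Xs i. i < N \<Longrightarrow> finite (Xs i) \<Longrightarrow> 2 \<le> card (Xs i) \<Longrightarrow> H Xs = 0"
    and H_local: "\<And>Xs Ys. (\<And>i. i < N \<Longrightarrow> Xs i = Ys i) \<Longrightarrow> H Xs = H Ys"
    and H_meas: "\<And>J. J \<subseteq> {..<N} \<Longrightarrow> (\<lambda>y. H (singleton_tuple J y)) \<in> borel_measurable (PiM J (\<lambda>_. lborel))"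
  shows "set_int F = (\<Sum>J\<in>Pow {..<N}. \<integral>\<^sup>+y. H (singleton_tuple J y) \<partial>PiM J (\<lambda>_. lborel))"
proof -
  define S where "S m = (\<Sum>J\<in>{J\<in>Pow {..<N}. card J = m}.
    \<integral>\<^sup>+y. H (singleton_tuple J y) \<partial>PiM J (\<lambda>_. lborel::'a measure))" for m
  have card_le: "card J \<le> N" if "J \<subseteq> {..<N}" for J
    using card_mono[OF finite_lessThan that] by simp
  have integral_eq: "(\<integral>\<^sup>+x. F (x ` {..<m}) \<partial>PiM {..<m} (\<lambda>_. lborel)) = of_nat (fact m) * S m" for m
    unfolding S_def by (rule nn_integral_image_sum_oparts[OF F H_zero H_local H_meas])
  have F_empty: "F {} = S 0"
  proof -
    have "(\<integral>\<^sup>+x. F (x ` {..<0::nat}) \<partial>PiM {..<0::nat} (\<lambda>_. lborel::'a measure)) = F {}"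
      by (simp add: PiM_empty nn_integral_count_space_finite)
    then show ?thesis using integral_eq[of 0] by simp
  qed
  have S_vanish: "S m = 0" if "N < m" for m
  proof -
    have "{J\<in>Pow {..<N}. card J = m} = {}"
      using card_le that by (metis (mono_tags, lifting) Collect_empty_eq PowD not_le)
    then show ?thesis unfolding S_def by (simp only: sum.empty)
  qed
  have fact_cancel: "ennreal (1 / fact m) * (of_nat (fact m) * s) = s" for m s
  proof -
    have "ennreal (1 / fact m) * of_nat (fact m) = ennreal (1 / fact m * fact m)"
      by (simp add: ennreal_of_nat_eq_real_of_nat ennreal_mult[symmetric])
    then show ?thesis by (simp add: mult.assoc[symmetric])
  qed
  have "set_int F = S 0 + (\<Sum>m. S (Suc m))"
    unfolding set_int_def F_empty integral_eq fact_cancel ..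
  also have "(\<Sum>m. S (Suc m)) = (\<Sum>m<N. S (Suc m))"
    by (rule suminf_finite) (auto intro: S_vanish)
  also have "S 0 + (\<Sum>m<N. S (Suc m)) = (\<Sum>m<Suc N. S m)"
    by (simp only: sum.lessThan_Suc_shift)
  also have "\<dots> = (\<Sum>J\<in>Pow {..<N}. \<integral>\<^sup>+y. H (singleton_tuple J y) \<partial>PiM J (\<lambda>_. lborel))"
    unfolding S_def
  proof (rule sum.group)
    show "card ` Pow {..<N} \<subseteq> {..<Suc N}" using card_le by (auto simp: less_Suc_eq_le)
  qed auto
  finally show ?thesis .
qed

lemma inj_on_extends_to_permutes:
  assumes A: "finite A" and D: "D \<subseteq> A" and f: "inj_on f D" "f ` D \<subseteq> A"
  shows "\<exists>\<pi>. \<pi> permutes A \<and> (\<forall>x\<in>D. \<pi> x = f x)"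
proof -
  have "card (A - D) = card (A - f ` D)"
    using A D f by (simp add: card_Diff_subset card_image finite_subset)
  then obtain h where h: "bij_betw h (A - D) (A - f ` D)"
    using finite_same_card_bij[of "A - D" "A - f ` D"] A by auto
  define \<pi> where "\<pi> x = (if x \<in> D then f x else if x \<in> A then h x else x)" for x
  have "bij_betw \<pi> D (f ` D)"
    using f by (auto simp: bij_betw_def inj_on_def \<pi>_def image_def)
  moreover have "bij_betw \<pi> (A - D) (A - f ` D)"
    using h by (rule bij_betw_cong[THEN iffD1, rotated]) (auto simp: \<pi>_def)
  ultimately have "bij_betw \<pi> (D \<union> (A - D)) (f ` D \<union> (A - f ` D))"
    by (rule bij_betw_combine) auto
  moreover have "D \<union> (A - D) = A" "f ` D \<union> (A - f ` D) = A" using D f by auto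
  ultimately have "\<pi> permutes A"
    by (intro bij_imp_permutes) (auto simp: \<pi>_def)
  then show ?thesis by (auto simp: \<pi>_def)
qed

lemma Setcompr_permutes_eqI:
  assumes "\<And>\<pi>. \<pi> permutes A \<Longrightarrow> \<phi> \<pi> permutes A \<and> f \<pi> = g (\<phi> \<pi>)"
    and "\<And>\<pi>. \<pi> permutes A \<Longrightarrow> \<psi> \<pi> permutes A \<and> g \<pi> = f (\<psi> \<pi>)"
  shows "{f \<pi> | \<pi>. \<pi> permutes A} = {g \<pi> | \<pi>. \<pi> permutes A}"
  using assms by blast

definition assignment_costs :: "real \<Rightarrow> real \<Rightarrow> ('a \<Rightarrow> 'a \<Rightarrow> real) \<Rightarrow> nat \<Rightarrow>
    (nat \<Rightarrow> 'a set) \<Rightarrow> (nat \<Rightarrow> 'a set) \<Rightarrow> real set" where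
  "assignment_costs p c d N Ys Zs =
     {\<Sum>i<N. dbarB c d (Ys i) (Zs (\<pi> i)) powr p | \<pi>. \<pi> permutes {..<N}}"

lemma finite_assignment_costs: "finite (assignment_costs p c d N Ys Zs)"
  unfolding assignment_costs_def using finite_permutations[of "{..<N}"] by (simp add: Setcompr_eq_image)

lemma assignment_costs_nonempty: "assignment_costs p c d N Ys Zs \<noteq> {}"
  unfolding assignment_costs_def using permutes_id by blast

lemma assignment_costs_nonneg: "x \<in> assignment_costs p c d N Ys Zs \<Longrightarrow> 0 \<le> x"
  unfolding assignment_costs_def by (auto intro!: sum_nonneg)

lemma assignment_costs_cong:
  assumes "\<And>i. i < N \<Longrightarrow> Ys i = Ys' i" "\<And>i. i < N \<Longrightarrow> Zs i = Zs' i"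
  shows "assignment_costs p c d N Ys Zs = assignment_costs p c d N Ys' Zs'"
  unfolding assignment_costs_def
  by (rule Setcompr_permutes_eqI[where \<phi>=id and \<psi>=id])
     (auto simp: assms permutes_in_image[of _ "{..<N}", simplified] intro!: sum.cong)

lemma assignment_costs_permute_left:
  assumes \<tau>: "\<tau> permutes {..<N}"
  shows "assignment_costs p c d N (\<lambda>i. Ys (\<tau> i)) Zs = assignment_costs p c d N Ys Zs"
  unfolding assignment_costs_def
proof (rule Setcompr_permutes_eqI[where \<phi>="\<lambda>\<pi>. \<pi> \<circ> inv \<tau>" and \<psi>="\<lambda>\<pi>. \<pi> \<circ> \<tau>"])
  fix \<pi> assume \<pi>: "\<pi> permutes {..<N}"
  have "\<pi> \<circ> inv \<tau> permutes {..<N}" using \<pi> \<tau> by (simp add: permutes_compose permutes_inv)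
  moreover have "(\<Sum>i<N. dbarB c d (Ys (\<tau> i)) (Zs (\<pi> i)) powr p) = (\<Sum>i<N. dbarB c d (Ys i) (Zs ((\<pi> \<circ> inv \<tau>) i)) powr p)"
    using sum.permute[OF \<tau>, of "\<lambda>i. dbarB c d (Ys i) (Zs ((\<pi> \<circ> inv \<tau>) i)) powr p"]
    by (simp add: permutes_inverses[OF \<tau>])
  ultimately show "\<pi> \<circ> inv \<tau> permutes {..<N} \<and>
    (\<Sum>i<N. dbarB c d (Ys (\<tau> i)) (Zs (\<pi> i)) powr p) = (\<Sum>i<N. dbarB c d (Ys i) (Zs ((\<pi> \<circ> inv \<tau>) i)) powr p)"
    by blast
  show "\<pi> \<circ> \<tau> permutes {..<N} \<and>
    (\<Sum>i<N. dbarB c d (Ys i) (Zs (\<pi> i)) powr p) = (\<Sum>i<N. dbarB c d (Ys (\<tau> i)) (Zs ((\<pi> \<circ> \<tau>) i)) powr p)"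
    using permutes_compose[OF \<tau> \<pi>] sum.permute[OF \<tau>, of "\<lambda>i. dbarB c d (Ys i) (Zs (\<pi> i)) powr p"]
    by simp
qed

lemma assignment_costs_permute_right:
  assumes \<tau>: "\<tau> permutes {..<N}"
  shows "assignment_costs p c d N Ys (\<lambda>i. Zs (\<tau> i)) = assignment_costs p c d N Ys Zs"
  unfolding assignment_costs_def
  by (rule Setcompr_permutes_eqI[where \<phi>="\<lambda>\<pi>. \<tau> \<circ> \<pi>" and \<psi>="\<lambda>\<pi>. inv \<tau> \<circ> \<pi>"])
     (simp_all add: \<tau> permutes_compose permutes_inv permutes_inverses[OF \<tau>])

lemma dbarB_simps:
  "dbarB c d {} {} = 0" "dbarB c d {x} {} = c" "dbarB c d {} {y} = c" "dbarB c d {x} {y} = dcut c d x y"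
  by (auto simp: dbarB_def)

lemma dbarB_commute:
  assumes "\<And>x y. x \<in> S \<Longrightarrow> y \<in> S \<Longrightarrow> d x y = d y x"
    and "X = {} \<or> (\<exists>x\<in>S. X = {x})" "Y = {} \<or> (\<exists>y\<in>S. Y = {y})"
  shows "dbarB c d X Y = dbarB c d Y X"
  using assms by (auto simp: dbarB_def dcut_def)

lemma assignment_costs_commute:
  assumes d_sym: "\<And>x y. x \<in> S \<Longrightarrow> y \<in> S \<Longrightarrow> d x y = d y x"
    and Ys: "\<And>i. i < N \<Longrightarrow> Ys i = {} \<or> (\<exists>x\<in>S. Ys i = {x})"
    and Zs: "\<And>i. i < N \<Longrightarrow> Zs i = {} \<or> (\<exists>x\<in>S. Zs i = {x})"
  shows "assignment_costs p c d N Zs Ys = assignment_costs p c d N Ys Zs"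
proof -
  have swap: "(\<Sum>i<N. dbarB c d (Zs i) (Ys (\<pi> i)) powr p) = (\<Sum>i<N. dbarB c d (Ys i) (Zs (inv \<pi> i)) powr p)"
    if \<pi>: "\<pi> permutes {..<N}" for \<pi>
  proof -
    have "(\<Sum>i<N. dbarB c d (Ys i) (Zs (inv \<pi> i)) powr p) = (\<Sum>i<N. dbarB c d (Ys (\<pi> i)) (Zs i) powr p)"
      using sum.permute[OF \<pi>, of "\<lambda>i. dbarB c d (Ys i) (Zs (inv \<pi> i)) powr p"]
      by (simp add: permutes_inverses[OF \<pi>])
    also have "\<dots> = (\<Sum>i<N. dbarB c d (Zs i) (Ys (\<pi> i)) powr p)"
    proof (intro sum.cong refl)
      fix i assume "i \<in> {..<N}"
      moreover have "\<pi> i \<in> {..<N}" using calculation permutes_in_image[OF \<pi>] by blast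
      ultimately show "dbarB c d (Ys (\<pi> i)) (Zs i) powr p = dbarB c d (Zs i) (Ys (\<pi> i)) powr p"
        using dbarB_commute[OF d_sym Ys[of "\<pi> i"] Zs[of i]] by simp
    qed
    finally show ?thesis by simp
  qed
  show ?thesis
    unfolding assignment_costs_def
    by (rule Setcompr_permutes_eqI[where \<phi>=inv and \<psi>=inv]) (simp_all add: permutes_inv permutes_inv_inv swap)
qed

definition list_tuple :: "'a list \<Rightarrow> nat \<Rightarrow> 'a set" where
  "list_tuple xs i = (if i < length xs then {xs ! i} else {})"

definition ospa_cost :: "real \<Rightarrow> real \<Rightarrow> ('a \<Rightarrow> 'a \<Rightarrow> real) \<Rightarrow> 'a list \<Rightarrow> 'a list \<Rightarrow> (nat \<Rightarrow> nat) \<Rightarrow> real"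
  where "ospa_cost p c d xs ys \<rho> =
    (\<Sum>j<length ys. dcut c d (xs ! (\<rho> j)) (ys ! j) powr p) + c powr p * real (length xs - length ys)"

text \<open>The inverse of \<rho> assigns each point of xs its matched point of ys, or an empty slot at
  cost c once ys is exhausted.\<close>

lemma ospa_cost_in_assignment_costs:
  assumes \<rho>: "\<rho> permutes {..<length xs}" and len: "length ys \<le> length xs" "length xs \<le> N"
  shows "ospa_cost p c d xs ys \<rho> \<in> assignment_costs p c d N (list_tuple xs) (list_tuple ys)"
proof -
  define n m where "n = length xs" and "m = length ys"
  define cost where "cost i = dbarB c d (list_tuple xs i) (list_tuple ys (inv \<rho> i)) powr p" for i
  have \<rho>_lt: "\<rho> j < n" if "j < n" for j
    using that permutes_in_image[OF \<rho>] by (simp add: n_def)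
  have \<rho>N: "\<rho> permutes {..<N}" using \<rho> len by (auto intro: permutes_subset)
  have "(\<Sum>i<N. cost i) = (\<Sum>i<n. cost i)"
  proof (rule sum.mono_neutral_right)
    show "\<forall>i\<in>{..<N} - {..<n}. cost i = 0"
      using permutes_not_in[OF permutes_inv[OF \<rho>]] len by (auto simp: cost_def n_def list_tuple_def dbarB_simps)
  qed (use len in \<open>auto simp: n_def\<close>)
  also have "\<dots> = (\<Sum>j<n. cost (\<rho> j))"
    using sum.permute[OF \<rho>, of cost] by (simp add: n_def)
  also have "\<dots> = (\<Sum>j<m. cost (\<rho> j)) + (\<Sum>j\<in>{m..<n}. cost (\<rho> j))"
    using len by (simp add: n_def m_def lessThan_atLeast0 sum.atLeastLessThan_concat)
  also have "(\<Sum>j<m. cost (\<rho> j)) = (\<Sum>j<m. dcut c d (xs ! (\<rho> j)) (ys ! j) powr p)"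
    using \<rho>_lt len by (intro sum.cong refl)
      (auto simp: cost_def list_tuple_def dbarB_simps permutes_inverses[OF \<rho>] n_def m_def)
  also have "(\<Sum>j\<in>{m..<n}. cost (\<rho> j)) = (\<Sum>j\<in>{m..<n}. c powr p)"
    using \<rho>_lt by (intro sum.cong refl)
      (auto simp: cost_def list_tuple_def dbarB_simps permutes_inverses[OF \<rho>] n_def m_def)
  finally have "(\<Sum>i<N. cost i) = ospa_cost p c d xs ys \<rho>"
    by (simp add: ospa_cost_def n_def m_def mult.commute)
  then show ?thesis
    unfolding assignment_costs_def cost_def using permutes_inv[OF \<rho>N] by (auto intro!: exI[of _ "inv \<rho>"])
qed

text \<open>Conversely, an assignment of the slots keeps its point-to-point matches D; completing
  them to a permutation of the points of xs costs at most c for every other point.\<close>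

lemma ospa_cost_le_assignment_cost:
  assumes \<pi>: "\<pi> permutes {..<N}" and len: "length ys \<le> length xs" "length xs \<le> N"
    and cut: "\<And>i j. i < length xs \<Longrightarrow> j < length ys \<Longrightarrow> dcut c d (xs ! i) (ys ! j) powr p \<le> c powr p"
  shows "\<exists>\<rho>. \<rho> permutes {..<length xs} \<and>
    ospa_cost p c d xs ys \<rho> \<le> (\<Sum>i<N. dbarB c d (list_tuple xs i) (list_tuple ys (\<pi> i)) powr p)"
proof -
  define n m where "n = length xs" and "m = length ys"
  define D where "D = {i. i < n \<and> \<pi> i < m}"
  define h where "h i = dbarB c d (list_tuple xs i) (list_tuple ys (\<pi> i)) powr p" for i
  have inj: "inj \<pi>" using \<pi> by (rule permutes_inj)
  have D: "D \<subseteq> {..<n}" "finite D" "\<pi> ` D \<subseteq> {..<m}" by (auto simp: D_def)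
  have card_\<pi>D: "card (\<pi> ` D) = card D" using inj by (simp add: card_image inj_on_subset)
  obtain \<rho> where \<rho>: "\<rho> permutes {..<n}" and \<rho>D: "\<forall>j\<in>\<pi> ` D. \<rho> j = inv \<pi> j"
  proof -
    have "inj_on (inv \<pi>) (\<pi> ` D)" using \<pi> by (meson inj_on_subset permutes_inj permutes_inv subset_UNIV)
    moreover have "\<pi> ` D \<subseteq> {..<n}" "inv \<pi> ` \<pi> ` D = D" using D len inj by (auto simp: n_def m_def)
    ultimately show ?thesis using inj_on_extends_to_permutes[of "{..<n}" "\<pi> ` D" "inv \<pi>"] D that by auto
  qed
  define e where "e j = dcut c d (xs ! (\<rho> j)) (ys ! j) powr p" for j
  have "(\<Sum>j<m. e j) = (\<Sum>j\<in>\<pi> ` D. e j) + (\<Sum>j\<in>{..<m} - \<pi> ` D. e j)"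
    using D by (metis add.commute finite_lessThan sum.subset_diff)
  also have "(\<Sum>j\<in>\<pi> ` D. e j) = (\<Sum>i\<in>D. h i)"
    using inj \<rho>D by (simp add: sum.reindex inj_on_subset)
      (auto intro!: sum.cong simp: e_def h_def D_def list_tuple_def dbarB_simps n_def m_def)
  also have "(\<Sum>j\<in>{..<m} - \<pi> ` D. e j) \<le> (\<Sum>j\<in>{..<m} - \<pi> ` D. c powr p)"
    using cut permutes_in_image[OF \<rho>] len by (intro sum_mono) (auto simp: e_def n_def m_def)
  finally have "ospa_cost p c d xs ys \<rho> \<le> (\<Sum>i\<in>D. h i) + real (m - card D) * c powr p + c powr p * real (n - m)"
    using D card_\<pi>D by (simp add: ospa_cost_def e_def n_def m_def card_Diff_subset)
  also have "\<dots> = (\<Sum>i\<in>D. h i) + (\<Sum>i\<in>{..<n} - D. h i)"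
  proof -
    have "card D \<le> m" using card_mono[OF _ D(3)] card_\<pi>D by simp
    then have "real (m - card D) * c powr p + c powr p * real (n - m) = real (card ({..<n} - D)) * c powr p"
      using D len by (simp add: card_Diff_subset algebra_simps of_nat_diff n_def m_def)
    also have "\<dots> = (\<Sum>i\<in>{..<n} - D. h i)"
      by (simp add: h_def D_def list_tuple_def dbarB_simps n_def m_def)
    finally show ?thesis by simp
  qed
  also have "\<dots> = (\<Sum>i<n. h i)"
    using sum.subset_diff[of D "{..<n}" h] D by (simp add: add.commute)
  also have "\<dots> \<le> (\<Sum>i<N. h i)"
    using len by (intro sum_mono2) (auto simp: h_def n_def)
  finally show ?thesis using \<rho> by (auto simp: h_def n_def)
qed

lemma Min_eq_by_lower_bounds:
  fixes A B :: "'b::linorder set"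
  assumes "finite A" "A \<noteq> {}" "finite B" "B \<noteq> {}"
    and "\<And>a. a \<in> A \<Longrightarrow> \<exists>b\<in>B. b \<le> a" and "\<And>b. b \<in> B \<Longrightarrow> \<exists>a\<in>A. a \<le> b"
  shows "Min A = Min B"
  using assms by (meson Min_in Min_le order_antisym order_trans)

lemma Min_ospa_costs_eq_Min_assignment_costs:
  assumes len: "length ys \<le> length xs" "length xs \<le> N"
    and cut: "\<And>i j. i < length xs \<Longrightarrow> j < length ys \<Longrightarrow> dcut c d (xs ! i) (ys ! j) powr p \<le> c powr p"
  shows "Min {ospa_cost p c d xs ys \<rho> | \<rho>. \<rho> permutes {..<length xs}}
    = Min (assignment_costs p c d N (list_tuple xs) (list_tuple ys))"
proof (rule Min_eq_by_lower_bounds)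
  show "finite {ospa_cost p c d xs ys \<rho> | \<rho>. \<rho> permutes {..<length xs}}"
    using finite_permutations[of "{..<length xs}"] by (simp add: Setcompr_eq_image)
  show "{ospa_cost p c d xs ys \<rho> | \<rho>. \<rho> permutes {..<length xs}} \<noteq> {}" using permutes_id by blast
  show "\<exists>b\<in>assignment_costs p c d N (list_tuple xs) (list_tuple ys). b \<le> a"
    if "a \<in> {ospa_cost p c d xs ys \<rho> | \<rho>. \<rho> permutes {..<length xs}}" for a
    using that ospa_cost_in_assignment_costs[OF _ len] by blast
  show "\<exists>a\<in>{ospa_cost p c d xs ys \<rho> | \<rho>. \<rho> permutes {..<length xs}}. a \<le> b"
    if "b \<in> assignment_costs p c d N (list_tuple xs) (list_tuple ys)" for b
    using that ospa_cost_le_assignment_cost[OF _ len cut] unfolding assignment_costs_def by blast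
qed (simp_all add: finite_assignment_costs assignment_costs_nonempty)

lemma enum_set_correct:
  assumes "finite X"
  shows "set (enum_set X) = X" "distinct (enum_set X)" "length (enum_set X) = card X"
proof -
  have "set (enum_set X) = X \<and> distinct (enum_set X)"
    unfolding enum_set_def by (rule someI_ex[OF finite_distinct_list[OF assms]])
  then show "set (enum_set X) = X" "distinct (enum_set X)" "length (enum_set X) = card X"
    using distinct_card by fastforce+
qed

lemma bern_est_at_most_singleton: "bern_est S N Ys \<Longrightarrow> i < N \<Longrightarrow> Ys i = {} \<or> (\<exists>x\<in>S. Ys i = {x})"
  by (simp add: bern_est_def)

lemma finite_UN_bern_est: "bern_est S N Ys \<Longrightarrow> finite (\<Union>i<N. Ys i)"
  by (auto simp: bern_est_def)

lemma bern_est_slots: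
  assumes Ys: "bern_est S N Ys" and xs: "distinct xs" "set xs = (\<Union>i<N. Ys i)"
  shows "\<exists>\<phi>. inj_on \<phi> {..<length xs} \<and> \<phi> ` {..<length xs} \<subseteq> {..<N} \<and>
    (\<forall>k<length xs. Ys (\<phi> k) = {xs ! k})"
proof -
  define n where "n = length xs"
  have disj: "disjoint_family_on Ys {..<N}" using Ys by (simp add: bern_est_def)
  have slot: "\<exists>!i. i < N \<and> xs ! k \<in> Ys i" if "k < n" for k
  proof -
    have "xs ! k \<in> (\<Union>i<N. Ys i)" using that xs(2) nth_mem n_def by blast
    then obtain i where i: "i < N" "xs ! k \<in> Ys i" by auto
    moreover have "j = i" if "j < N" "xs ! k \<in> Ys j" for j
      using disj that i by (auto simp: disjoint_family_on_def)
    ultimately show ?thesis by blast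
  qed
  define \<phi> where "\<phi> k = (THE i. i < N \<and> xs ! k \<in> Ys i)" for k
  have \<phi>: "\<phi> k < N" "xs ! k \<in> Ys (\<phi> k)" if "k < n" for k
    using theI'[OF slot[OF that]] unfolding \<phi>_def by auto
  have \<phi>_slot: "Ys (\<phi> k) = {xs ! k}" if "k < n" for k
    using bern_est_at_most_singleton[OF Ys \<phi>(1)[OF that]] \<phi>(2)[OF that] by auto
  have "inj_on \<phi> {..<n}"
  proof (rule inj_onI)
    fix k1 k2 assume k: "k1 \<in> {..<n}" "k2 \<in> {..<n}" "\<phi> k1 = \<phi> k2"
    then have "xs ! k1 = xs ! k2" using \<phi>_slot by (metis lessThan_iff singleton_inject)
    then show "k1 = k2" using xs(1) k by (simp add: n_def nth_eq_iff_index_eq)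
  qed
  with \<phi> \<phi>_slot show ?thesis unfolding n_def by blast
qed

lemma bern_est_permutes_to_list_tuple:
  assumes Ys: "bern_est S N Ys" and xs: "distinct xs" "set xs = (\<Union>i<N. Ys i)"
  shows "length xs \<le> N" "\<exists>\<tau>. \<tau> permutes {..<N} \<and> (\<forall>i<N. Ys (\<tau> i) = list_tuple xs i)"
proof -
  define n where "n = length xs"
  obtain \<phi> where \<phi>_inj: "inj_on \<phi> {..<n}" and \<phi>_img: "\<phi> ` {..<n} \<subseteq> {..<N}"
    and \<phi>_slot: "\<And>k. k < n \<Longrightarrow> Ys (\<phi> k) = {xs ! k}"
    using bern_est_slots[OF assms] unfolding n_def by blast
  show n: "length xs \<le> N" using card_inj_on_le[OF \<phi>_inj \<phi>_img] by (simp add: n_def)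
  obtain \<tau> where \<tau>: "\<tau> permutes {..<N}" and \<tau>\<phi>: "\<forall>k\<in>{..<n}. \<tau> k = \<phi> k"
    using inj_on_extends_to_permutes[of "{..<N}" "{..<n}" \<phi>] \<phi>_inj \<phi>_img n n_def by auto
  \<comment> \<open>A slot not hit by the points of xs contains none of them, hence is empty.\<close>
  have "Ys (\<tau> i) = {}" if i: "i < N" "n \<le> i" for i
  proof (rule ccontr)
    assume "Ys (\<tau> i) \<noteq> {}"
    then obtain u where u: "u \<in> Ys (\<tau> i)" by blast
    have \<tau>i: "\<tau> i < N" using \<tau> i by (metis lessThan_iff permutes_in_image)
    then have "u \<in> set xs" using u xs(2) by auto
    then obtain k where k: "k < n" "xs ! k = u" by (auto simp: in_set_conv_nth n_def)
    then have "u \<in> Ys (\<tau> k)" using \<phi>_slot \<tau>\<phi> by simp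
    moreover have "\<tau> k < N" using \<tau>\<phi> \<phi>_img k by auto
    ultimately have "\<tau> k = \<tau> i"
      using u \<tau>i Ys unfolding bern_est_def disjoint_family_on_def by blast
    then have "k = i" using permutes_inj[OF \<tau>] by (auto simp: inj_def)
    then show False using k i by simp
  qed
  then have "Ys (\<tau> i) = list_tuple xs i" if "i < N" for i
    using that \<tau>\<phi> \<phi>_slot by (cases "i < n") (auto simp: list_tuple_def n_def)
  with \<tau> show "\<exists>\<tau>. \<tau> permutes {..<N} \<and> (\<forall>i<N. Ys (\<tau> i) = list_tuple xs i)" by blast
qed

lemma dcut_powr_le:
  "0 \<le> p \<Longrightarrow> 0 \<le> c \<Longrightarrow> 0 \<le> d x y \<Longrightarrow> dcut c d x y powr p \<le> c powr p"
  by (simp add: dcut_def powr_mono2)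

lemma ospa_ge_UN_powr:
  assumes p: "p > 0" and c: "c > 0" and d_nonneg: "\<And>x y. x \<in> S \<Longrightarrow> y \<in> S \<Longrightarrow> 0 \<le> d x y"
    and Ys: "bern_est S N Ys" and Zs: "bern_est S N Zs"
    and card: "card (\<Union>i<N. Zs i) \<le> card (\<Union>i<N. Ys i)"
  shows "ospa_ge p c d (\<Union>i<N. Ys i) (\<Union>i<N. Zs i) powr p = Min (assignment_costs p c d N Ys Zs)"
proof -
  define xs ys where "xs = enum_set (\<Union>i<N. Ys i)" and "ys = enum_set (\<Union>i<N. Zs i)"
  note xs = enum_set_correct[OF finite_UN_bern_est[OF Ys], folded xs_def]
  note ys = enum_set_correct[OF finite_UN_bern_est[OF Zs], folded ys_def]
  obtain \<tau>1 where \<tau>1: "\<tau>1 permutes {..<N}" "\<forall>i<N. Ys (\<tau>1 i) = list_tuple xs i"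
    using bern_est_permutes_to_list_tuple(2)[OF Ys xs(2,1)] by blast
  obtain \<tau>2 where \<tau>2: "\<tau>2 permutes {..<N}" "\<forall>i<N. Zs (\<tau>2 i) = list_tuple ys i"
    using bern_est_permutes_to_list_tuple(2)[OF Zs ys(2,1)] by blast
  have xs_S: "set xs \<subseteq> S" and ys_S: "set ys \<subseteq> S"
    using xs(1) ys(1) bern_est_at_most_singleton[OF Ys] bern_est_at_most_singleton[OF Zs] by fastforce+
  have cut: "dcut c d (xs ! i) (ys ! j) powr p \<le> c powr p" if "i < length xs" "j < length ys" for i j
    using that xs_S ys_S p c by (intro dcut_powr_le d_nonneg) auto
  define M where "M = {ospa_cost p c d xs ys \<rho> | \<rho>. \<rho> permutes {..<length xs}}"
  have "Min M = Min (assignment_costs p c d N (list_tuple xs) (list_tuple ys))"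
    unfolding M_def using card xs(3) ys(3) bern_est_permutes_to_list_tuple(1)[OF Ys xs(2,1)]
    by (intro Min_ospa_costs_eq_Min_assignment_costs cut) auto
  also have "assignment_costs p c d N (list_tuple xs) (list_tuple ys)
      = assignment_costs p c d N (\<lambda>i. Ys (\<tau>1 i)) (\<lambda>i. Zs (\<tau>2 i))"
    using \<tau>1 \<tau>2 by (intro assignment_costs_cong) auto
  also have "\<dots> = assignment_costs p c d N Ys Zs"
    by (simp add: assignment_costs_permute_left[OF \<tau>1(1)] assignment_costs_permute_right[OF \<tau>2(1)])
  finally have M_eq: "Min M = Min (assignment_costs p c d N Ys Zs)" .
  have "0 \<le> Min M"
    unfolding M_eq using Min_in[OF finite_assignment_costs assignment_costs_nonempty]
    by (rule assignment_costs_nonneg)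
  moreover have "ospa_ge p c d (\<Union>i<N. Ys i) (\<Union>i<N. Zs i) = Min M powr (1/p)"
    unfolding ospa_ge_def M_def ospa_cost_def xs_def ys_def Let_def ..
  ultimately show ?thesis using M_eq p by (simp add: powr_powr)
qed

lemma Min_powr_image:
  fixes M :: "real set"
  assumes "finite M" "M \<noteq> {}" "\<And>x. x \<in> M \<Longrightarrow> 0 \<le> x" "p > 0"
  shows "Min ((\<lambda>x. x powr (1/p)) ` M) powr p = Min M"
proof -
  have "Min ((\<lambda>x. x powr (1/p)) ` M) = Min M powr (1/p)"
    using assms by (intro Min_eqI) (auto intro!: powr_mono2 Min_in)
  then show ?thesis using assms Min_in[OF assms(1,2)] by (simp add: powr_powr)
qed

lemma dbar_UN_powr_eq_dbar_tuple_powr: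
  assumes p: "p > 0" and c: "c > 0" and d_nonneg: "\<And>x y. x \<in> S \<Longrightarrow> y \<in> S \<Longrightarrow> 0 \<le> d x y"
    and d_sym: "\<And>x y. x \<in> S \<Longrightarrow> y \<in> S \<Longrightarrow> d x y = d y x"
    and Ys: "bern_est S N Ys" and Zs: "bern_est S N Zs"
  shows "dbar p c d (\<Union>i<N. Ys i) (\<Union>i<N. Zs i) powr p = dbar_tuple p c d N Ys Zs powr p"
proof -
  have "dbar_tuple p c d N Ys Zs = Min ((\<lambda>x. x powr (1/p)) ` assignment_costs p c d N Ys Zs)"
    unfolding dbar_tuple_def assignment_costs_def by (rule arg_cong[where f=Min]) auto
  then have "dbar_tuple p c d N Ys Zs powr p = Min (assignment_costs p c d N Ys Zs)"
    using p by (simp add: Min_powr_image finite_assignment_costs assignment_costs_nonempty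
        assignment_costs_nonneg)
  moreover have "assignment_costs p c d N Zs Ys = assignment_costs p c d N Ys Zs"
    using d_sym bern_est_at_most_singleton[OF Ys] bern_est_at_most_singleton[OF Zs] by (rule assignment_costs_commute)
  ultimately show ?thesis
    using ospa_ge_UN_powr[OF p c d_nonneg Ys Zs] ospa_ge_UN_powr[OF p c d_nonneg Zs Ys]
    by (auto simp: dbar_def)
qed

lemma measurable_singleton_tuple_component:
  assumes "(\<lambda>x. f {x}) \<in> borel_measurable M"
  shows "(\<lambda>y. f (singleton_tuple J y i)) \<in> borel_measurable (PiM J (\<lambda>_. M))"
proof (cases "i \<in> J")
  case True
  have "(\<lambda>y. y i) \<in> measurable (PiM J (\<lambda>_. M)) M"
    using True by (rule measurable_component_singleton)
  from measurable_comp[OF this assms] True show ?thesis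
    by (simp add: singleton_tuple_def comp_def)
qed (simp add: singleton_tuple_def)

definition hyp_cost :: "real \<Rightarrow> real \<Rightarrow> ('a \<Rightarrow> 'a \<Rightarrow> real) \<Rightarrow> nat \<Rightarrow> ('h \<Rightarrow> real) \<Rightarrow> ('h \<Rightarrow> 'a \<Rightarrow> real) \<Rightarrow>
    (nat \<Rightarrow> 'a set) \<Rightarrow> 'h list \<Rightarrow> (nat \<Rightarrow> 'a set) \<Rightarrow> ennreal" where
  "hyp_cost p c d N r q Xh a Xs =
     ennreal ((\<Prod>i<N. bern (r (a ! i)) (q (a ! i)) (Xs i)) * dbar_tuple p c d N Xs Xh powr p)"

lemma hyp_cost_zero:
  assumes "i < N" "finite (Xs i)" "2 \<le> card (Xs i)"
  shows "hyp_cost p c d N r q Xh a Xs = 0"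
proof -
  have "bern (r (a ! i)) (q (a ! i)) (Xs i) = 0" using assms by (auto simp: bern_def)
  then have "(\<Prod>i<N. bern (r (a ! i)) (q (a ! i)) (Xs i)) = 0" using assms by (intro prod_zero) auto
  then show ?thesis unfolding hyp_cost_def by (simp only: mult_zero_left ennreal_0)
qed

lemma hyp_cost_local:
  assumes "\<And>i. i < N \<Longrightarrow> Xs i = Ys i"
  shows "hyp_cost p c d N r q Xh a Xs = hyp_cost p c d N r q Xh a Ys"
proof -
  have "(\<Prod>i<N. bern (r (a ! i)) (q (a ! i)) (Xs i)) = (\<Prod>i<N. bern (r (a ! i)) (q (a ! i)) (Ys i))"
    using assms by (intro prod.cong) auto
  moreover have "(\<Sum>i<N. dbarB c d (Xs i) (Xh (\<pi> i)) powr p) = (\<Sum>i<N. dbarB c d (Ys i) (Xh (\<pi> i)) powr p)" for \<pi>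
    using assms by (intro sum.cong) auto
  ultimately show ?thesis unfolding hyp_cost_def dbar_tuple_def by simp
qed

lemma hyp_cost_measurable:
  fixes d :: "'a::euclidean_space \<Rightarrow> 'a \<Rightarrow> real"
  assumes q_meas: "\<And>h. q h \<in> borel_measurable lborel"
    and d_meas: "\<And>y. (\<lambda>x. d x y) \<in> borel_measurable lborel"
  shows "(\<lambda>y. hyp_cost p c d N r q Xh a (singleton_tuple J y)) \<in> borel_measurable (PiM J (\<lambda>_. lborel))"
proof -
  have [measurable]: "q h \<in> borel_measurable borel" for h using q_meas by simp
  have [measurable]: "(\<lambda>x. d x y) \<in> borel_measurable borel" for y using d_meas by simp
  have [measurable]: "(\<lambda>y. bern (r h) (q h) (singleton_tuple J y i))
      \<in> borel_measurable (PiM J (\<lambda>_. lborel::'a measure))" for h i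
    by (rule measurable_singleton_tuple_component) (simp add: bern_def)
  have [measurable]: "(\<lambda>y. dbarB c d (singleton_tuple J y i) Z) \<in> borel_measurable (PiM J (\<lambda>_. lborel::'a measure))"
    for i Z
  proof (rule measurable_singleton_tuple_component)
    have "(\<lambda>x. dbarB c d {x} Z) = (\<lambda>x. if Z = {} then c else min c (d x (the_elem Z)))"
      by (auto simp: dbarB_def dcut_def)
    then show "(\<lambda>x. dbarB c d {x} Z) \<in> borel_measurable lborel" by simp
  qed
  have "dbar_tuple p c d N (singleton_tuple J y) Xh = Min ((\<lambda>\<pi>.
      (\<Sum>i<N. dbarB c d (singleton_tuple J y i) (Xh (\<pi> i)) powr p) powr (1/p)) ` {\<pi>. \<pi> permutes {..<N}})" for y
    unfolding dbar_tuple_def by (rule arg_cong[where f=Min]) auto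
  moreover have "(\<lambda>y. Min ((\<lambda>\<pi>. (\<Sum>i<N. dbarB c d (singleton_tuple J y i) (Xh (\<pi> i)) powr p) powr (1/p))
      ` {\<pi>. \<pi> permutes {..<N}})) \<in> borel_measurable (PiM J (\<lambda>_. lborel::'a measure))"
    by (rule borel_measurable_Min[OF finite_permutations]) measurable
  ultimately have [measurable]:
      "(\<lambda>y. dbar_tuple p c d N (singleton_tuple J y) Xh) \<in> borel_measurable (PiM J (\<lambda>_. lborel::'a measure))"
    by simp
  show ?thesis unfolding hyp_cost_def by measurable
qed

lemma bern_est_if_prod_bern_nonzero:
  assumes Xs: "Xs \<in> oparts N X"
    and q_supp: "\<And>h x. x \<notin> S \<Longrightarrow> q h x = 0"
    and nonzero: "(\<Prod>i<N. bern (r (a ! i)) (q (a ! i)) (Xs i)) \<noteq> 0"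
  shows "bern_est S N Xs"
  unfolding bern_est_def
proof (intro conjI allI impI)
  fix i assume i: "i < N"
  then have bern_i: "bern (r (a ! i)) (q (a ! i)) (Xs i) \<noteq> 0" using nonzero by auto
  show "Xs i = {} \<or> (\<exists>x\<in>S. Xs i = {x})"
  proof (cases "Xs i = {}")
    case False
    with bern_i obtain x where x: "Xs i = {x}"
      by (auto simp: bern_def card_Suc_eq split: if_splits)
    then have "q (a ! i) x \<noteq> 0" using bern_i by (simp add: bern_def)
    then show ?thesis using x q_supp by blast
  qed simp
qed (use Xs in \<open>simp add: oparts_def\<close>)

lemma dbar_powr_mbm_eq_sum_oparts:
  assumes p: "p > 0" and c: "c > 0"
    and d_nonneg: "\<And>x y. x \<in> S \<Longrightarrow> y \<in> S \<Longrightarrow> 0 \<le> d x y"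
    and d_sym: "\<And>x y. x \<in> S \<Longrightarrow> y \<in> S \<Longrightarrow> d x y = d y x"
    and r: "\<And>h. 0 \<le> r h \<and> r h \<le> 1"
    and q_nonneg: "\<And>h x. 0 \<le> q h x" and q_supp: "\<And>h x. x \<notin> S \<Longrightarrow> q h x = 0"
    and w_nonneg: "\<And>a. a \<in> A \<Longrightarrow> 0 \<le> w a"
    and Yh: "bern_est S N Yh"
  shows "ennreal (dbar p c d X (\<Union>j<N. Yh j) powr p * mbm N A w r q X)
    = (\<Sum>Xs\<in>oparts N X. \<Sum>a\<in>A. ennreal (w a) * hyp_cost p c d N r q Yh a Xs)"
proof -
  define B where "B a Xs = (\<Prod>i<N. bern (r (a ! i)) (q (a ! i)) (Xs i))" for a Xs
  have B_nonneg: "0 \<le> B a Xs" for a Xs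
    unfolding B_def using r q_nonneg by (intro prod_nonneg) (simp add: bern_def)
  \<comment> \<open>Only partitions into Bernoulli sets carry weight, and on them both distances agree.\<close>
  have B_dbar: "B a Xs * dbar p c d X (\<Union>j<N. Yh j) powr p = B a Xs * dbar_tuple p c d N Xs Yh powr p"
    if Xs: "Xs \<in> oparts N X" for a Xs
  proof (cases "B a Xs = 0")
    case False
    have "(\<Union>i<N. Xs i) = X" using Xs by (simp add: oparts_def)
    with dbar_UN_powr_eq_dbar_tuple_powr[OF p c d_nonneg d_sym
        bern_est_if_prod_bern_nonzero[OF Xs q_supp False[unfolded B_def]] Yh]
    show ?thesis by simp
  qed simp
  have "dbar p c d X (\<Union>j<N. Yh j) powr p * mbm N A w r q X
      = (\<Sum>a\<in>A. \<Sum>Xs\<in>oparts N X. w a * (B a Xs * dbar p c d X (\<Union>j<N. Yh j) powr p))"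
    unfolding mbm_def B_def by (simp add: sum_distrib_left sum_distrib_right algebra_simps)
  also have "\<dots> = (\<Sum>a\<in>A. \<Sum>Xs\<in>oparts N X. w a * (B a Xs * dbar_tuple p c d N Xs Yh powr p))"
    by (intro sum.cong refl) (simp add: B_dbar)
  finally have "ennreal (dbar p c d X (\<Union>j<N. Yh j) powr p * mbm N A w r q X)
      = (\<Sum>a\<in>A. \<Sum>Xs\<in>oparts N X. ennreal (w a * (B a Xs * dbar_tuple p c d N Xs Yh powr p)))"
    using w_nonneg B_nonneg by (simp add: sum_nonneg)
  also have "\<dots> = (\<Sum>a\<in>A. \<Sum>Xs\<in>oparts N X. ennreal (w a) * hyp_cost p c d N r q Yh a Xs)"
    unfolding hyp_cost_def B_def[symmetric]
    by (intro sum.cong refl ennreal_mult w_nonneg mult_nonneg_nonneg B_nonneg powr_ge_zero)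
  finally show ?thesis by (simp add: sum.swap[of _ A])
qed

lemma obj2_eq_sum_PiM:
  fixes d :: "'a::euclidean_space \<Rightarrow> 'a \<Rightarrow> real"
  assumes q_meas: "\<And>h. q h \<in> borel_measurable lborel"
    and d_meas: "\<And>y. (\<lambda>x. d x y) \<in> borel_measurable lborel"
  shows "obj2 p c d N A w r q Xh = (\<Sum>J\<in>Pow {..<N}. \<integral>\<^sup>+y.
    (\<Sum>a\<in>A. ennreal (w a) * hyp_cost p c d N r q Xh a (singleton_tuple J y)) \<partial>PiM J (\<lambda>_. lborel))"
proof -
  note meas[measurable] = hyp_cost_measurable[OF q_meas d_meas]
  have "obj2 p c d N A w r q Xh = (\<Sum>a\<in>A. ennreal (w a) * msi N (hyp_cost p c d N r q Xh a))"
    unfolding obj2_def hyp_cost_def ..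
  also have "\<dots> = (\<Sum>a\<in>A. ennreal (w a) *
      (\<Sum>J\<in>Pow {..<N}. \<integral>\<^sup>+y. hyp_cost p c d N r q Xh a (singleton_tuple J y) \<partial>PiM J (\<lambda>_. lborel)))"
    by (subst msi_eq_sum_PiM) (auto intro: hyp_cost_zero meas)
  also have "\<dots> = (\<Sum>J\<in>Pow {..<N}. \<Sum>a\<in>A.
      \<integral>\<^sup>+y. ennreal (w a) * hyp_cost p c d N r q Xh a (singleton_tuple J y) \<partial>PiM J (\<lambda>_. lborel))"
    by (simp add: sum_distrib_left sum.swap[of _ A] nn_integral_cmult meas)
  also have "\<dots> = (\<Sum>J\<in>Pow {..<N}. \<integral>\<^sup>+y.
      (\<Sum>a\<in>A. ennreal (w a) * hyp_cost p c d N r q Xh a (singleton_tuple J y)) \<partial>PiM J (\<lambda>_. lborel))"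
    by (intro sum.cong refl nn_integral_sum[symmetric]) measurable
  finally show ?thesis .
qed

lemma obj1_UN_eq_sum_PiM:
  fixes d :: "'a::euclidean_space \<Rightarrow> 'a \<Rightarrow> real"
  assumes p: "p > 0" and c: "c > 0"
    and d_nonneg: "\<And>x y. x \<in> S \<Longrightarrow> y \<in> S \<Longrightarrow> 0 \<le> d x y"
    and d_sym: "\<And>x y. x \<in> S \<Longrightarrow> y \<in> S \<Longrightarrow> d x y = d y x"
    and d_meas: "\<And>y. (\<lambda>x. d x y) \<in> borel_measurable lborel"
    and r: "\<And>h. 0 \<le> r h \<and> r h \<le> 1"
    and q_meas: "\<And>h. q h \<in> borel_measurable lborel"
    and q_nonneg: "\<And>h x. 0 \<le> q h x" and q_supp: "\<And>h x. x \<notin> S \<Longrightarrow> q h x = 0"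
    and w_nonneg: "\<And>a. a \<in> A \<Longrightarrow> 0 \<le> w a"
    and Xh: "bern_est S N Xh"
  shows "obj1 p c d N A w r q (\<Union>j<N. Xh j) = (\<Sum>J\<in>Pow {..<N}. \<integral>\<^sup>+y.
    (\<Sum>a\<in>A. ennreal (w a) * hyp_cost p c d N r q Xh a (singleton_tuple J y)) \<partial>PiM J (\<lambda>_. lborel))"
  unfolding obj1_def
proof (rule set_int_sum_oparts)
  show "ennreal (dbar p c d (x ` {..<n}) (\<Union>j<N. Xh j) powr p * mbm N A w r q (x ` {..<n}))
      = (\<Sum>Xs\<in>oparts N (x ` {..<n}). \<Sum>a\<in>A. ennreal (w a) * hyp_cost p c d N r q Xh a Xs)" for n x
    by (rule dbar_powr_mbm_eq_sum_oparts[OF p c d_nonneg d_sym r q_nonneg q_supp w_nonneg Xh])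
  show "(\<Sum>a\<in>A. ennreal (w a) * hyp_cost p c d N r q Xh a Xs) = (\<Sum>a\<in>A. ennreal (w a) * hyp_cost p c d N r q Xh a Ys)"
    if "\<And>i. i < N \<Longrightarrow> Xs i = Ys i" for Xs Ys
    using hyp_cost_local[of N Xs Ys p c d r q Xh] that by (intro sum.cong refl) presburger
  note hyp_cost_measurable[OF q_meas d_meas, measurable]
  show "(\<lambda>y. \<Sum>a\<in>A. ennreal (w a) * hyp_cost p c d N r q Xh a (singleton_tuple J y))
      \<in> borel_measurable (PiM J (\<lambda>_. lborel))" for J
    by measurable
qed (simp add: hyp_cost_zero)

lemma obj1_UN_eq_obj2:
  fixes d :: "'a::euclidean_space \<Rightarrow> 'a \<Rightarrow> real"
  assumes p: "p > 0" and c: "c > 0"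
    and d_nonneg: "\<And>x y. x \<in> S \<Longrightarrow> y \<in> S \<Longrightarrow> 0 \<le> d x y"
    and d_sym: "\<And>x y. x \<in> S \<Longrightarrow> y \<in> S \<Longrightarrow> d x y = d y x"
    and d_meas: "\<And>y. (\<lambda>x. d x y) \<in> borel_measurable lborel"
    and r: "\<And>h. 0 \<le> r h \<and> r h \<le> 1"
    and q_meas: "\<And>h. q h \<in> borel_measurable lborel"
    and q_nonneg: "\<And>h x. 0 \<le> q h x" and q_supp: "\<And>h x. x \<notin> S \<Longrightarrow> q h x = 0"
    and w_nonneg: "\<And>a. a \<in> A \<Longrightarrow> 0 \<le> w a"
    and Xh: "bern_est S N Xh"
  shows "obj1 p c d N A w r q (\<Union>j<N. Xh j) = obj2 p c d N A w r q Xh"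
  using obj1_UN_eq_sum_PiM[where q=q and d=d and r=r and w=w and A=A,
      OF p c d_nonneg d_sym d_meas r q_meas q_nonneg q_supp w_nonneg Xh]
    obj2_eq_sum_PiM[where q=q and d=d, OF q_meas d_meas] by simp

lemma bern_est_list_tuple:
  assumes "distinct xs" "set xs \<subseteq> S" "length xs \<le> N"
  shows "bern_est S N (list_tuple xs)" "(\<Union>j<N. list_tuple xs j) = set xs"
proof -
  show "bern_est S N (list_tuple xs)"
    using assms unfolding bern_est_def disjoint_family_on_def list_tuple_def
    by (auto simp: nth_eq_iff_index_eq)
  have "list_tuple xs i = {xs ! i}" if "i < length xs" for i using that by (simp add: list_tuple_def)
  then show "(\<Union>j<N. list_tuple xs j) = set xs"
    using assms(3) by (fastforce simp: list_tuple_def in_set_conv_nth split: if_splits)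
qed

lemma card_UN_bern_est_le:
  assumes "bern_est S N Ys"
  shows "card (\<Union>i<N. Ys i) \<le> N"
proof -
  have "card (\<Union>i<N. Ys i) \<le> (\<Sum>i<N. card (Ys i))" by (rule card_UN_le) simp
  also have "\<dots> \<le> (\<Sum>i<N. 1)"
    using bern_est_at_most_singleton[OF assms] by (intro sum_mono) fastforce
  finally show ?thesis by simp
qed

lemma UN_bern_est_eq:
  "{\<Union>j<N. Yh j | Yh. bern_est S N Yh} = {Y. finite Y \<and> Y \<subseteq> S \<and> card Y \<le> N}"
proof (intro set_eqI iffI)
  fix Y assume "Y \<in> {\<Union>j<N. Yh j | Yh. bern_est S N Yh}"
  then show "Y \<in> {Y. finite Y \<and> Y \<subseteq> S \<and> card Y \<le> N}"
    using finite_UN_bern_est card_UN_bern_est_le bern_est_at_most_singleton by fastforce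
next
  fix Y assume "Y \<in> {Y. finite Y \<and> Y \<subseteq> S \<and> card Y \<le> N}"
  then show "Y \<in> {\<Union>j<N. Yh j | Yh. bern_est S N Yh}"
    using bern_est_list_tuple[of "enum_set Y" S N] enum_set_correct[of Y] by auto
qed

theorem lemma1:
  fixes S :: "'a::euclidean_space set" and d :: "'a \<Rightarrow> 'a \<Rightarrow> real"
    and p c :: real and N :: nat
    and A :: "'h list set" and w :: "'h list \<Rightarrow> real"
    and r :: "'h \<Rightarrow> real" and q :: "'h \<Rightarrow> 'a \<Rightarrow> real"
    and Xh :: "nat \<Rightarrow> 'a set"
  assumes S_meas: "S \<in> sets lborel"
    and d_nonneg: "\<And>x y. x \<in> S \<Longrightarrow> y \<in> S \<Longrightarrow> 0 \<le> d x y"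
    and d_zero: "\<And>x y. x \<in> S \<Longrightarrow> y \<in> S \<Longrightarrow> d x y = 0 \<longleftrightarrow> x = y"
    and d_sym: "\<And>x y. x \<in> S \<Longrightarrow> y \<in> S \<Longrightarrow> d x y = d y x"
    and d_tri: "\<And>x y z. x \<in> S \<Longrightarrow> y \<in> S \<Longrightarrow> z \<in> S \<Longrightarrow> d x z \<le> d x y + d y z"
    and d_meas: "\<And>y. (\<lambda>x. d x y) \<in> borel_measurable lborel"
    and p: "p \<ge> 1" and c: "c > 0"
    and r: "\<And>h. 0 \<le> r h \<and> r h \<le> 1"
    and q_meas: "\<And>h. q h \<in> borel_measurable lborel"
    and q_nonneg: "\<And>h x. 0 \<le> q h x"
    and q_supp: "\<And>h x. x \<notin> S \<Longrightarrow> q h x = 0"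
    and q_int: "\<And>h. (\<integral>\<^sup>+ x. ennreal (q h x) \<partial>lborel) = 1"
    and A_fin: "finite A"
    and A_len: "\<And>a. a \<in> A \<Longrightarrow> length a = N"
    and w_nonneg: "\<And>a. a \<in> A \<Longrightarrow> 0 \<le> w a"
    and w_sum: "(\<Sum>a\<in>A. w a) = 1"
    and Xh: "bern_est S N Xh"
  shows "(\<forall>Yh. bern_est S N Yh \<longrightarrow> obj2 p c d N A w r q Xh \<le> obj2 p c d N A w r q Yh)
     \<longleftrightarrow> (\<forall>Y. finite Y \<and> Y \<subseteq> S \<and> card Y \<le> N \<longrightarrow>
            obj1 p c d N A w r q (\<Union>j<N. Xh j) \<le> obj1 p c d N A w r q Y)"
proof -
  have obj_eq: "obj1 p c d N A w r q (\<Union>j<N. Yh j) = obj2 p c d N A w r q Yh" if "bern_est S N Yh" for Yh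
    using p by (intro obj1_UN_eq_obj2[OF _ c d_nonneg d_sym d_meas r q_meas q_nonneg q_supp w_nonneg that]) simp
  have "(\<forall>Yh. bern_est S N Yh \<longrightarrow> obj2 p c d N A w r q Xh \<le> obj2 p c d N A w r q Yh)
      \<longleftrightarrow> (\<forall>Y\<in>{\<Union>j<N. Yh j | Yh. bern_est S N Yh}.
            obj1 p c d N A w r q (\<Union>j<N. Xh j) \<le> obj1 p c d N A w r q Y)"
    using obj_eq by (auto simp: obj_eq[OF Xh, symmetric])
  then show ?thesis unfolding UN_bern_est_eq by blast
qed

end
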